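(* Let $S,T$ be positive invertible operators on a Hilbert space and let $0\le p\le 1$. Then $$W_p(S,T)\le 2p(1-p)\left(S\nabla T-S\sharp T\right)+L(S,T)$$ in the Loewner order.
   Context: For positive invertible $S,T$ and $t\in[0,1]$: $S\sharp_tT=S^{1/2}(S^{-1/2}TS^{-1/2})^tS^{1/2}$, $S\sharp T=S\sharp_{1/2}T$, $S\nabla T=\frac{S+T}{2}$, $Hz_p(S,T)=\frac12(S\sharp_pT+S\sharp_{1-p}T)$, and $L(S,T)=\int_0^1 S\sharp_tT\,dt$. The operator Wigner--Yanase--Dyson function is $W_p(S,T)=\frac{p(1-p)}{2}(S-T)\left(S\nabla T-Hz_p(S,T)\right)^{-1}(S-T)$ for $S\ne T$ (whenever the inverse exists) and $W_p(S,S)=S$; in general it is understood as $W_p(S,T)=S^{1/2}f_p(S^{-1/2}TS^{-1/2})S^{1/2}$ with $f_p(x)=\frac{p(1-p)(x-1)^2}{(x^p-1)(x^{1-p}-1)}$ for $x\ne1$, $f_p(1)=1$, $f_0(x)=f_1(x)=\frac{x-1}{\log x}$, which agrees with the formula above when the inverse exists. *)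

theory Defs
  imports "HOL-Analysis.Analysis"
begin

type_synonym 'a op = "'a \<Rightarrow>\<^sub>L 'a"

fun op_pow :: "'a::real_normed_vector op \<Rightarrow> nat \<Rightarrow> 'a op" where
  "op_pow A 0 = id_blinfun"
| "op_pow A (Suc n) = A o\<^sub>L op_pow A n"

definition selfadjoint :: "'a::real_inner op \<Rightarrow> bool" where
  "selfadjoint A \<longleftrightarrow> (\<forall>x y. inner (A x) y = inner x (A y))"

definition positive_op :: "'a::real_inner op \<Rightarrow> bool" where
  "positive_op A \<longleftrightarrow> selfadjoint A \<and> (\<forall>x. 0 \<le> inner (A x) x)"

definition invertible_op :: "'a::real_normed_vector op \<Rightarrow> bool" where
  "invertible_op A \<longleftrightarrow> (\<exists>B. A o\<^sub>L B = id_blinfun \<and> B o\<^sub>L A = id_blinfun)"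

definition inv_op :: "'a::real_normed_vector op \<Rightarrow> 'a op" where
  "inv_op A = (THE B. A o\<^sub>L B = id_blinfun \<and> B o\<^sub>L A = id_blinfun)"

definition loewner_le :: "'a::real_inner op \<Rightarrow> 'a op \<Rightarrow> bool" where
  "loewner_le A B \<longleftrightarrow> positive_op (B - A)"

(* Continuous functional calculus for a positive invertible operator A.
  Its spectrum lies in [a,b] with a = 1/norm(inv A) (the minimum of the spectrum) and
  b = norm A (the maximum).  f(A) is the norm limit of the Bernstein polynomials of f on [a,b]
  evaluated at A (these converge uniformly to f on [a,b] for continuous f, hence in operator
  norm at A).  If a = b, then A = a I and f(A) = f(a) I. *)
definition bernstein_op :: "(real \<Rightarrow> real) \<Rightarrow> real \<Rightarrow> real \<Rightarrow> nat \<Rightarrow> 'a::real_normed_vector op \<Rightarrow> 'a op" where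
  "bernstein_op f a b n A =
     (\<Sum>k\<le>n. (f (a + real k * (b - a) / real n) * real (n choose k)) *\<^sub>R
        (op_pow ((1 / (b - a)) *\<^sub>R (A - a *\<^sub>R id_blinfun)) k o\<^sub>L
         op_pow ((1 / (b - a)) *\<^sub>R (b *\<^sub>R id_blinfun - A)) (n - k)))"

definition opfun :: "(real \<Rightarrow> real) \<Rightarrow> 'a::{real_inner,complete_space} op \<Rightarrow> 'a op" where
  "opfun f A =
     (let a = 1 / norm (inv_op A); b = norm A in
      if a = b then f a *\<^sub>R id_blinfun
      else lim (\<lambda>n. bernstein_op f a b n A))"

definition wgmean :: "'a::{real_inner,complete_space} op \<Rightarrow> real \<Rightarrow> 'a op \<Rightarrow> 'a op" where
  "wgmean S t T =
     (let Sh = opfun (\<lambda>x. x powr (1/2)) S; Smh = opfun (\<lambda>x. x powr (-1/2)) S in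
      Sh o\<^sub>L opfun (\<lambda>x. x powr t) (Smh o\<^sub>L T o\<^sub>L Smh) o\<^sub>L Sh)"

definition gmean :: "'a::{real_inner,complete_space} op \<Rightarrow> 'a op \<Rightarrow> 'a op" where
  "gmean S T = wgmean S (1/2) T"

definition amean :: "'a::{real_inner,complete_space} op \<Rightarrow> 'a op \<Rightarrow> 'a op" where
  "amean S T = (1/2) *\<^sub>R (S + T)"

definition heinz :: "real \<Rightarrow> 'a::{real_inner,complete_space} op \<Rightarrow> 'a op \<Rightarrow> 'a op" where
  "heinz p S T = (1/2) *\<^sub>R (wgmean S p T + wgmean S (1 - p) T)"

definition logmean :: "'a::{real_inner,complete_space} op \<Rightarrow> 'a op \<Rightarrow> 'a op" where
  "logmean S T = integral {0..1::real} (\<lambda>t. wgmean S t T)"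

definition fWYD :: "real \<Rightarrow> real \<Rightarrow> real" where
  "fWYD p x =
     (if x = 1 then 1
      else if p = 0 \<or> p = 1 then (x - 1) / ln x
      else p * (1 - p) * (x - 1)^2 / ((x powr p - 1) * (x powr (1 - p) - 1)))"

definition WYD :: "real \<Rightarrow> 'a::{real_inner,complete_space} op \<Rightarrow> 'a op \<Rightarrow> 'a op" where
  "WYD p S T =
     (let Sh = opfun (\<lambda>x. x powr (1/2)) S; Smh = opfun (\<lambda>x. x powr (-1/2)) S in
      Sh o\<^sub>L opfun (fWYD p) (Smh o\<^sub>L T o\<^sub>L Smh) o\<^sub>L Sh)"

end

theory Submission
  imports Defs "HOL-Computational_Algebra.Polynomial"
begin

text \<open>Write \<open>X = S\<^sup>-\<^sup>1\<^sup>/\<^sup>2 T S\<^sup>-\<^sup>1\<^sup>/\<^sup>2\<close>. Every mean in the statement is \<open>S\<^sup>1\<^sup>/\<^sup>2 f(X) S\<^sup>1\<^sup>/\<^sup>2\<close> for a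
  scalar function \<open>f\<close>: \<open>f\<^sub>p\<close> for \<open>W\<^sub>p\<close>, \<open>(1 + x)/2 - x\<^sup>1\<^sup>/\<^sup>2\<close> for \<open>S\<nabla>T - S\<sharp>T\<close>, and
  \<open>\<integral>\<^sub>0\<^sup>1 x\<^sup>t dt = (x - 1)/log x = f\<^sub>0(x)\<close> for \<open>L(S,T)\<close>. Since the functional calculus is linear and
  positivity preserving, and congruence by \<open>S\<^sup>1\<^sup>/\<^sup>2\<close> preserves the Loewner order, the theorem
  reduces to the scalar inequality \<open>f\<^sub>p(x) \<le> 2p(1-p)((1+x)/2 - x\<^sup>1\<^sup>/\<^sup>2) + f\<^sub>0(x)\<close> for \<open>x > 0\<close>.
  Substituting \<open>x = e\<^sup>2\<^sup>s\<close> and \<open>p = (1 + d/s)/2\<close> turns it into an inequality between hyperbolic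
  functions, proved by two monotonicity arguments.

  The properties of the Bernstein functional calculus on \<open>[a, b]\<close> rest on two facts: all products of
  powers of \<open>(A - a)/(b - a)\<close> and \<open>(b - A)/(b - a)\<close> are positive operators, and a bound
  \<open>\<bar>f x - f y\<bar> \<le> e + K (x - y)\<^sup>2\<close> lets one compare Bernstein sums in the Loewner order with an
  explicit positive polynomial in \<open>A\<close>, which bounds them in norm.\<close>

hide_const (open) Polynomial.content \<comment> \<open>\<open>content\<close> is the measure of a box below\<close>

section \<open>Self-adjoint and positive operators\<close>

interpretation blinfun_compose: bounded_bilinear blinfun_compose
  by (rule bounded_bilinear_blinfun_compose)

lemma blinfun_compose_assoc: "(A o\<^sub>L B) o\<^sub>L C = A o\<^sub>L (B o\<^sub>L C)"
  by (rule blinfun_eqI) simp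

lemma blinfun_compose_id_left [simp]: "id_blinfun o\<^sub>L A = A"
  by (rule blinfun_eqI) simp

lemma blinfun_compose_id_right [simp]: "A o\<^sub>L id_blinfun = A"
  by (rule blinfun_eqI) simp

lemmas blinfun_compose_simps =
  blinfun_compose.add_left blinfun_compose.add_right blinfun_compose.diff_left
  blinfun_compose.diff_right blinfun_compose.scaleR_left blinfun_compose.scaleR_right

lemma selfadjoint_id [simp]: "selfadjoint id_blinfun"
  by (simp add: selfadjoint_def)

lemma selfadjoint_0 [simp]: "selfadjoint 0"
  by (simp add: selfadjoint_def)

lemma selfadjoint_add: "selfadjoint A \<Longrightarrow> selfadjoint B \<Longrightarrow> selfadjoint (A + B)"
  by (simp add: selfadjoint_def blinfun.bilinear_simps inner_add_left inner_add_right)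

lemma selfadjoint_diff: "selfadjoint A \<Longrightarrow> selfadjoint B \<Longrightarrow> selfadjoint (A - B)"
  by (simp add: selfadjoint_def blinfun.bilinear_simps inner_diff_left inner_diff_right)

lemma selfadjoint_scaleR: "selfadjoint A \<Longrightarrow> selfadjoint (c *\<^sub>R A)"
  by (simp add: selfadjoint_def blinfun.bilinear_simps)

lemma selfadjoint_compose_commuting:
  assumes "selfadjoint A" "selfadjoint B" "A o\<^sub>L B = B o\<^sub>L A"
  shows "selfadjoint (A o\<^sub>L B)"
  unfolding selfadjoint_def
proof (intro allI)
  fix x y
  have "inner ((A o\<^sub>L B) x) y = inner x ((B o\<^sub>L A) y)"
    using assms(1,2) by (simp add: selfadjoint_def)
  then show "inner ((A o\<^sub>L B) x) y = inner x ((A o\<^sub>L B) y)"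
    using assms(3) by simp
qed

lemma selfadjoint_inner_commute: "selfadjoint A \<Longrightarrow> inner (A x) y = inner (A y) x"
  by (simp add: selfadjoint_def inner_commute)

lemma selfadjoint_sandwich: "selfadjoint B \<Longrightarrow> selfadjoint P \<Longrightarrow> selfadjoint (B o\<^sub>L P o\<^sub>L B)"
  by (simp add: selfadjoint_def)

lemma positive_sandwich:
  assumes "selfadjoint B" "positive_op P"
  shows "positive_op (B o\<^sub>L P o\<^sub>L B)"
  using assms unfolding positive_op_def
  by (auto intro: selfadjoint_sandwich) (metis selfadjoint_def)

lemma positive_id [simp]: "positive_op id_blinfun"
  by (simp add: positive_op_def)

lemma positive_0 [simp]: "positive_op 0"
  by (simp add: positive_op_def)

lemma positive_add: "positive_op A \<Longrightarrow> positive_op B \<Longrightarrow> positive_op (A + B)"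
  by (auto simp: positive_op_def selfadjoint_add blinfun.bilinear_simps inner_add_left)

lemma positive_scaleR: "positive_op A \<Longrightarrow> 0 \<le> c \<Longrightarrow> positive_op (c *\<^sub>R A)"
  by (auto simp: positive_op_def selfadjoint_scaleR blinfun.bilinear_simps)

lemma positive_sum: "(\<And>i. i \<in> I \<Longrightarrow> positive_op (f i)) \<Longrightarrow> positive_op (\<Sum>i\<in>I. f i)"
  by (induction I rule: infinite_finite_induct) (auto intro: positive_add)

lemma positive_Cauchy_Schwarz:
  assumes P: "positive_op P"
  shows "(inner (P x) y)^2 \<le> inner (P x) x * inner (P y) y"
proof -
  have nn: "\<And>z. 0 \<le> inner (P z) z" using P by (auto simp: positive_op_def)
  define a b c where "a = inner (P x) x" and "b = inner (P x) y" and "c = inner (P y) y"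
  have "inner (P y) x = b"
    using P selfadjoint_inner_commute b_def by (auto simp: positive_op_def)
  then have q: "0 \<le> a + 2 * t * b + t^2 * c" for t
    using nn[of "x + t *\<^sub>R y"]
    by (simp add: a_def b_def c_def blinfun.bilinear_simps inner_add_left inner_add_right
        power2_eq_square algebra_simps)
  show ?thesis
  proof (cases "c = 0")
    case True
    have "b = 0"
    proof (rule ccontr)
      assume "b \<noteq> 0"
      have "0 \<le> a + 2 * (- (a + 1) / (2 * b)) * b" using q[of "- (a + 1) / (2 * b)"] True by simp
      also have "\<dots> = -1" using \<open>b \<noteq> 0\<close> by (simp add: field_simps)
      finally show False by simp
    qed
    then show ?thesis using True by (simp add: b_def c_def)
  next
    case False
    then have c0: "0 < c" using nn c_def by (simp add: order_less_le)
    have "0 \<le> a + 2 * (- b / c) * b + (- b / c)^2 * c" by (rule q)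
    also have "\<dots> = a - b^2 / c" using c0 by (simp add: field_simps power2_eq_square)
    finally show ?thesis using c0 by (simp add: a_def b_def c_def field_simps)
  qed
qed

lemma norm_apply_positive_sq:
  assumes P: "positive_op P"
  shows "(norm (P x))^2 \<le> norm P * inner (P x) x"
proof -
  have nn: "0 \<le> inner (P x) x" using P by (simp add: positive_op_def)
  have "inner (P (P x)) (P x) \<le> norm P * (norm (P x))^2"
  proof -
    have "inner (P (P x)) (P x) \<le> norm (P (P x)) * norm (P x)" by (rule norm_cauchy_schwarz)
    also have "\<dots> \<le> norm P * norm (P x) * norm (P x)"
      by (intro mult_right_mono norm_blinfun) simp
    finally show ?thesis by (simp add: power2_eq_square mult.assoc)
  qed
  then have "(inner (P x) (P x))^2 \<le> inner (P x) x * (norm P * (norm (P x))^2)"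
    using positive_Cauchy_Schwarz[OF P, of x "P x"] nn by (meson mult_left_mono order_trans)
  then have "((norm (P x))^2)^2 \<le> (norm P * inner (P x) x) * (norm (P x))^2"
    by (simp add: power2_norm_eq_inner algebra_simps)
  then have "(norm (P x))^2 * (norm (P x))^2 \<le> (norm P * inner (P x) x) * (norm (P x))^2"
    by (simp only: power2_eq_square[of "(norm (P x))^2"])
  moreover have "0 < (norm (P x))^2" if "P x \<noteq> 0" using that by simp
  ultimately show ?thesis
    using nn by (cases "P x = 0") (simp, metis mult_right_le_imp_le)
qed

lemma norm_selfadjoint_le:
  assumes sa: "selfadjoint B" and M: "0 \<le> M"
    and bnd: "\<And>x. \<bar>inner (B x) x\<bar> \<le> M * (norm x)^2"
  shows "norm B \<le> M"
proof (rule norm_blinfun_bound[OF M])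
  fix x
  have polar: "4 * inner (B x) y \<le> 2 * M * ((norm x)^2 + (norm y)^2)" for y
  proof -
    have "4 * inner (B x) y = inner (B (x + y)) (x + y) - inner (B (x - y)) (x - y)"
      using selfadjoint_inner_commute[OF sa, of y x]
      by (simp add: blinfun.bilinear_simps inner_add_left inner_add_right inner_diff_left inner_diff_right)
    also have "\<dots> \<le> M * (norm (x + y))^2 + M * (norm (x - y))^2"
      using bnd[of "x + y"] bnd[of "x - y"] by linarith
    also have "\<dots> = 2 * M * ((norm x)^2 + (norm y)^2)"
      by (simp add: power2_norm_eq_inner inner_add_left inner_add_right inner_diff_left inner_diff_right
          inner_commute algebra_simps)
    finally show ?thesis .
  qed
  show "norm (B x) \<le> M * norm x"
  proof (cases "B x = 0")
    case True then show ?thesis using M by simp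
  next
    case False
    then have nBx: "0 < norm (B x)" and nx: "0 < norm x"
      by (simp, metis blinfun.zero_right zero_less_norm_iff)
    define y where "y = (norm x / norm (B x)) *\<^sub>R B x"
    have "norm y = norm x" "inner (B x) y = norm x * norm (B x)"
      using nBx by (simp_all add: y_def power2_norm_eq_inner[symmetric] power2_eq_square)
    with polar[of y] have "norm x * norm (B x) \<le> norm x * (M * norm x)"
      by (simp add: power2_eq_square algebra_simps)
    with nx show ?thesis by simp
  qed
qed

section \<open>Limits of operators\<close>

lemma tendsto_inner_apply:
  fixes B :: "nat \<Rightarrow> 'a::real_inner op"
  assumes "B \<longlonglongrightarrow> L"
  shows "(\<lambda>n. inner (B n x) y) \<longlonglongrightarrow> inner (L x) y"
  using blinfun.tendsto[OF assms tendsto_const[of x]] by (rule tendsto_inner[OF _ tendsto_const])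

lemma selfadjoint_limit:
  fixes B :: "nat \<Rightarrow> 'a::real_inner op"
  assumes "B \<longlonglongrightarrow> L" "\<And>n. selfadjoint (B n)"
  shows "selfadjoint L"
  unfolding selfadjoint_def
proof (intro allI)
  fix x y
  have "(\<lambda>n. inner (B n y) x) \<longlonglongrightarrow> inner (L x) y"
    using tendsto_inner_apply[OF assms(1), of x y] assms(2) by (simp add: selfadjoint_inner_commute)
  with tendsto_inner_apply[OF assms(1), of y x] have "inner (L x) y = inner (L y) x"
    by (metis LIMSEQ_unique)
  then show "inner (L x) y = inner x (L y)" by (simp add: inner_commute)
qed

lemma positive_limit:
  fixes B :: "nat \<Rightarrow> 'a::real_inner op"
  assumes "B \<longlonglongrightarrow> L" "\<And>n. positive_op (B n)"
  shows "positive_op L"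
proof -
  have "selfadjoint L" using assms by (intro selfadjoint_limit[OF assms(1)]) (auto simp: positive_op_def)
  moreover have "0 \<le> inner (L x) x" for x
    using tendsto_inner_apply[OF assms(1), of x x] assms(2)
    by (intro LIMSEQ_le_const[of "\<lambda>n. inner (B n x) x"]) (auto simp: positive_op_def)
  ultimately show ?thesis by (simp add: positive_op_def)
qed

text \<open>The operator space is complete. The library records this only for codomains of class
  \<open>banach\<close>, to which a type of sort \<open>{real_inner, complete_space}\<close> is not known to belong.\<close>

lemma blinfun_Cauchy_convergent:
  fixes X :: "nat \<Rightarrow> 'a::real_normed_vector \<Rightarrow>\<^sub>L 'b::{real_normed_vector, complete_space}"
  assumes X: "Cauchy X"
  shows "convergent X"
proof -
  have "Cauchy (\<lambda>n. X n x)" for x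
    using bounded_linear.Cauchy[OF blinfun.bounded_linear_left X] .
  then obtain v where v: "\<And>x. (\<lambda>n. X n x) \<longlonglongrightarrow> v x"
    unfolding Cauchy_convergent_iff convergent_def by metis
  have unif: "\<exists>M. \<forall>n\<ge>M. \<forall>x. norm (X n x - v x) \<le> e * norm x" if e: "0 < e" for e
  proof -
    obtain M where M: "\<And>m n. M \<le> m \<Longrightarrow> M \<le> n \<Longrightarrow> norm (X m - X n) < e"
      using CauchyD[OF X e] by blast
    have "norm (X n x - v x) \<le> e * norm x" if n: "M \<le> n" for n x
    proof (rule tendsto_upperbound)
      show "(\<lambda>m. norm (X n x - X m x)) \<longlonglongrightarrow> norm (X n x - v x)"
        by (intro tendsto_intros v)
      show "eventually (\<lambda>m. norm (X n x - X m x) \<le> e * norm x) sequentially"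
        using eventually_ge_at_top[of M]
      proof eventually_elim
        case (elim m)
        have "norm (X n x - X m x) \<le> norm (X n - X m) * norm x"
          by (metis blinfun.diff_left norm_blinfun)
        also have "\<dots> \<le> e * norm x" using M[OF n elim] by (intro mult_right_mono) auto
        finally show ?case .
      qed
    qed simp
    then show ?thesis by blast
  qed
  have "bounded_linear v"
  proof
    fix x y :: 'a and r :: real
    have "(\<lambda>n. X n (x + y)) \<longlonglongrightarrow> v x + v y" "(\<lambda>n. X n (r *\<^sub>R x)) \<longlonglongrightarrow> r *\<^sub>R v x"
      using tendsto_add[OF v v] tendsto_scaleR[OF tendsto_const v] by (simp_all add: blinfun.bilinear_simps)
    then show "v (x + y) = v x + v y" "v (r *\<^sub>R x) = r *\<^sub>R v x"
      using v by (auto intro: LIMSEQ_unique)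
  next
    obtain M where M: "\<And>x. norm (X M x - v x) \<le> 1 * norm x" using unif[of 1] by auto
    have "norm (v x) \<le> norm x * (norm (X M) + 1)" for x
      using norm_triangle_ineq2[of "v x" "X M x"] norm_blinfun[of "X M" x] M[of x]
      by (simp add: norm_minus_commute algebra_simps)
    then show "\<exists>K. \<forall>x. norm (v x) \<le> norm x * K" by blast
  qed
  have "X \<longlonglongrightarrow> Blinfun v"
  proof (rule LIMSEQ_I)
    fix r :: real assume r: "0 < r"
    obtain M where M: "\<forall>n\<ge>M. \<forall>x. norm (X n x - v x) \<le> (r / 2) * norm x"
      using unif[of "r / 2"] r by auto
    have "norm (X n - Blinfun v) \<le> r / 2" if "M \<le> n" for n
      using M that r \<open>bounded_linear v\<close>
      by (intro norm_blinfun_bound) (auto simp: bounded_linear_Blinfun_apply blinfun.bilinear_simps)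
    then show "\<exists>M. \<forall>n\<ge>M. norm (X n - Blinfun v) < r" using r by force
  qed
  then show ?thesis by (rule convergentI)
qed

section \<open>Polynomials in an operator\<close>

definition poly_op :: "'a::real_normed_vector op \<Rightarrow> real poly \<Rightarrow> 'a op" where
  "poly_op A p = (\<Sum>i\<le>degree p. coeff p i *\<^sub>R op_pow A i)"

lemma poly_op_upto:
  assumes "degree p < N"
  shows "poly_op A p = (\<Sum>i<N. coeff p i *\<^sub>R op_pow A i)"
proof -
  have "(\<Sum>i<N. coeff p i *\<^sub>R op_pow A i) = (\<Sum>i\<le>degree p. coeff p i *\<^sub>R op_pow A i)"
    by (rule sum.mono_neutral_right) (use assms in \<open>auto simp: coeff_eq_0\<close>)
  then show ?thesis by (simp add: poly_op_def)
qed

lemma poly_op_0 [simp]: "poly_op A 0 = 0"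
  by (simp add: poly_op_def)

lemma poly_op_pCons: "poly_op A (pCons c p) = c *\<^sub>R id_blinfun + (A o\<^sub>L poly_op A p)"
proof -
  define N where "N = Suc (degree p)"
  have "poly_op A (pCons c p) = (\<Sum>i<Suc N. coeff (pCons c p) i *\<^sub>R op_pow A i)"
    using degree_pCons_le[of c p] by (intro poly_op_upto) (simp add: N_def)
  also have "\<dots> = c *\<^sub>R id_blinfun + (\<Sum>i<N. coeff p i *\<^sub>R op_pow A (Suc i))"
    by (subst sum.lessThan_Suc_shift) simp
  also have "(\<Sum>i<N. coeff p i *\<^sub>R op_pow A (Suc i)) = A o\<^sub>L (\<Sum>i<N. coeff p i *\<^sub>R op_pow A i)"
    by (simp add: blinfun_compose.sum_right blinfun_compose.scaleR_right)
  also have "(\<Sum>i<N. coeff p i *\<^sub>R op_pow A i) = poly_op A p"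
    by (rule poly_op_upto[symmetric]) (simp add: N_def)
  finally show ?thesis .
qed

lemma poly_op_add: "poly_op A (p + q) = poly_op A p + poly_op A q"
proof -
  define N where "N = Suc (max (degree p) (degree q))"
  have "poly_op A (p + q) = (\<Sum>i<N. coeff (p + q) i *\<^sub>R op_pow A i)"
    using degree_add_le_max[of p q] by (intro poly_op_upto) (simp add: N_def)
  also have "\<dots> = (\<Sum>i<N. coeff p i *\<^sub>R op_pow A i) + (\<Sum>i<N. coeff q i *\<^sub>R op_pow A i)"
    by (simp add: scaleR_add_left sum.distrib)
  also have "\<dots> = poly_op A p + poly_op A q"
    by (subst (1 2) poly_op_upto[where N=N]) (auto simp: N_def)
  finally show ?thesis .
qed

lemma poly_op_smult: "poly_op A (smult c p) = c *\<^sub>R poly_op A p"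
proof -
  define N where "N = Suc (degree p)"
  have "poly_op A (smult c p) = (\<Sum>i<N. coeff (smult c p) i *\<^sub>R op_pow A i)"
    using degree_smult_le[of c p] by (intro poly_op_upto) (simp add: N_def)
  also have "\<dots> = c *\<^sub>R (\<Sum>i<N. coeff p i *\<^sub>R op_pow A i)"
    by (simp add: scaleR_sum_right)
  also have "\<dots> = c *\<^sub>R poly_op A p"
    by (subst poly_op_upto[where N=N]) (auto simp: N_def)
  finally show ?thesis .
qed

lemma poly_op_diff: "poly_op A (p - q) = poly_op A p - poly_op A q"
  using poly_op_add[of A p "- q"] poly_op_smult[of A "-1" q] by simp

lemma poly_op_const: "poly_op A [:c:] = c *\<^sub>R id_blinfun"
  by (simp add: poly_op_pCons)

lemma poly_op_1 [simp]: "poly_op A 1 = id_blinfun"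
  by (simp add: one_pCons poly_op_const)

lemma poly_op_X: "poly_op A [:0, 1:] = A"
  by (simp add: poly_op_pCons)

lemma poly_op_mult: "poly_op A (p * q) = poly_op A p o\<^sub>L poly_op A q"
proof (induction p)
  case (pCons a p)
  have "poly_op A (pCons a p * q) = a *\<^sub>R poly_op A q + (A o\<^sub>L poly_op A (p * q))"
    by (simp add: poly_op_add poly_op_smult poly_op_pCons)
  also have "\<dots> = poly_op A (pCons a p) o\<^sub>L poly_op A q"
    using pCons.IH by (simp add: poly_op_pCons blinfun_compose_simps blinfun_compose_assoc)
  finally show ?case .
qed simp

lemma poly_op_sum: "poly_op A (\<Sum>i\<in>I. f i) = (\<Sum>i\<in>I. poly_op A (f i))"
  by (induction I rule: infinite_finite_induct) (auto simp: poly_op_add)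

lemma poly_op_power: "poly_op A (p ^ k) = op_pow (poly_op A p) k"
  by (induction k) (auto simp: poly_op_mult)

lemma selfadjoint_poly_op:
  assumes "selfadjoint A"
  shows "selfadjoint (poly_op A p)"
proof (induction p)
  case (pCons a p)
  have "A o\<^sub>L poly_op A p = poly_op A p o\<^sub>L A"
    by (metis poly_op_X poly_op_mult mult.commute)
  then show ?case unfolding poly_op_pCons
    by (intro selfadjoint_add selfadjoint_scaleR selfadjoint_id selfadjoint_compose_commuting assms pCons.IH)
qed simp

section \<open>Operators with quadratic form between two bounds\<close>

definition quadform_between :: "'a::real_inner op \<Rightarrow> real \<Rightarrow> real \<Rightarrow> bool" where
  "quadform_between A a b \<longleftrightarrow> selfadjoint A \<and>
     (\<forall>x. a * (norm x)^2 \<le> inner (A x) x \<and> inner (A x) x \<le> b * (norm x)^2)"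

text \<open>The affine maps of \<open>[a, b]\<close> onto \<open>[0, 1]\<close> and onto \<open>[1, 0]\<close>, whose products of powers
  make up the Bernstein basis on \<open>[a, b]\<close>.\<close>

definition unit_param :: "real \<Rightarrow> real \<Rightarrow> real poly" where
  "unit_param a b = smult (1 / (b - a)) [:- a, 1:]"

definition unit_coparam :: "real \<Rightarrow> real \<Rightarrow> real poly" where
  "unit_coparam a b = smult (1 / (b - a)) [:b, - 1:]"

lemma unit_param_add_coparam: "a < b \<Longrightarrow> unit_param a b + unit_coparam a b = 1"
  by (simp add: unit_param_def unit_coparam_def one_pCons flip: smult_add_right diff_divide_distrib)

lemma poly_unit_param: "poly (unit_param a b) x = (x - a) / (b - a)"
  by (simp add: unit_param_def diff_divide_distrib)

lemma poly_unit_coparam: "poly (unit_coparam a b) x = 1 - poly (unit_param a b) x"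
  if "a < b"
proof -
  have "poly (unit_coparam a b) x = (b - x) / (b - a)"
    by (simp add: unit_coparam_def diff_divide_distrib)
  then show ?thesis using that by (simp add: poly_unit_param field_simps)
qed

lemma poly_op_unit_param: "poly_op A (unit_param a b) = (1 / (b - a)) *\<^sub>R (A - a *\<^sub>R id_blinfun)"
  by (simp add: unit_param_def poly_op_smult poly_op_pCons blinfun_compose.scaleR_right scaleR_diff_right)

lemma poly_op_unit_coparam: "poly_op A (unit_coparam a b) = (1 / (b - a)) *\<^sub>R (b *\<^sub>R id_blinfun - A)"
  by (simp add: unit_coparam_def poly_op_smult poly_op_pCons blinfun_compose.scaleR_right
      blinfun_compose.minus_right scaleR_diff_right)

context
  fixes A :: "'a::real_inner op" and a b :: real
  assumes between: "quadform_between A a b" and ab: "a < b"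
begin

private abbreviation (input) "U \<equiv> poly_op A (unit_param a b)"
private abbreviation (input) "V \<equiv> poly_op A (unit_coparam a b)"

lemma selfadjoint_poly_op_between: "selfadjoint (poly_op A p)"
  using between by (intro selfadjoint_poly_op) (simp add: quadform_between_def)

lemma positive_unit_param: "positive_op U"
proof -
  have "0 \<le> inner (U x) x" for x
  proof -
    have "inner (U x) x = (inner (A x) x - a * (norm x)^2) / (b - a)"
      by (simp add: poly_op_unit_param blinfun.bilinear_simps inner_diff_left power2_norm_eq_inner)
    then show ?thesis using between ab by (simp add: quadform_between_def)
  qed
  then show ?thesis using selfadjoint_poly_op_between by (simp add: positive_op_def)
qed

lemma positive_unit_coparam: "positive_op V"
proof -
  have "0 \<le> inner (V x) x" for x
  proof -
    have "inner (V x) x = (b * (norm x)^2 - inner (A x) x) / (b - a)"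
      by (simp add: poly_op_unit_coparam blinfun.bilinear_simps inner_diff_left power2_norm_eq_inner)
    then show ?thesis using between ab by (simp add: quadform_between_def)
  qed
  then show ?thesis using selfadjoint_poly_op_between by (simp add: positive_op_def)
qed

lemma unit_coparam_op_eq: "V = id_blinfun - U"
  using unit_param_add_coparam[OF ab] by (metis poly_op_1 poly_op_add add_diff_cancel_left')

lemma inner_unit_param_le: "inner (U x) x \<le> (norm x)^2"
proof -
  have "inner (U x) x + inner (V x) x = (norm x)^2"
    by (simp add: unit_coparam_op_eq blinfun.bilinear_simps inner_diff_left power2_norm_eq_inner)
  moreover have "0 \<le> inner (V x) x" using positive_unit_coparam by (simp add: positive_op_def)
  ultimately show ?thesis by simp
qed

lemma norm_unit_param_le: "norm U \<le> 1"
proof (rule norm_selfadjoint_le[OF selfadjoint_poly_op_between])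
  fix x
  show "\<bar>inner (U x) x\<bar> \<le> 1 * (norm x)^2"
    using inner_unit_param_le positive_unit_param by (simp add: positive_op_def)
qed simp

lemma inner_unit_param_mult_coparam:
  "inner (poly_op A (unit_param a b * unit_coparam a b) x) x = inner (U x) x - (norm (U x))^2"
proof -
  have "inner (U (U x)) x = (norm (U x))^2"
    using selfadjoint_poly_op_between by (simp add: selfadjoint_def power2_norm_eq_inner)
  then show ?thesis
    by (simp add: poly_op_mult unit_coparam_op_eq blinfun.bilinear_simps inner_diff_left)
qed

lemma positive_unit_param_mult_coparam: "positive_op (poly_op A (unit_param a b * unit_coparam a b))"
proof -
  have "(norm (U x))^2 \<le> inner (U x) x" for x
  proof -
    have "(norm (U x))^2 \<le> norm U * inner (U x) x" by (rule norm_apply_positive_sq[OF positive_unit_param])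
    also have "\<dots> \<le> 1 * inner (U x) x"
      using norm_unit_param_le positive_unit_param by (intro mult_right_mono) (auto simp: positive_op_def)
    finally show ?thesis by simp
  qed
  then show ?thesis
    using selfadjoint_poly_op_between by (simp add: positive_op_def inner_unit_param_mult_coparam)
qed

lemma inner_unit_param_mult_coparam_le:
  "inner (poly_op A (unit_param a b * unit_coparam a b) x) x \<le> (norm x)^2"
  using inner_unit_param_le[of x] zero_le_power2[of "norm (U x)"]
  unfolding inner_unit_param_mult_coparam by linarith

text \<open>Split off even powers of \<open>U\<close> and \<open>V\<close> symmetrically on both sides; what remains in the middle
  is one of \<open>1\<close>, \<open>U\<close>, \<open>V\<close>, \<open>U V\<close>.\<close>

lemma positive_unit_param_power_mult:
  "positive_op (poly_op A (unit_param a b ^ k * unit_coparam a b ^ j))"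
proof -
  define u v where "u = unit_param a b" and "v = unit_coparam a b"
  define w where "w = u ^ (k div 2) * v ^ (j div 2)"
  have eq: "u ^ k * v ^ j = w * (u ^ (k mod 2) * v ^ (j mod 2)) * w"
  proof -
    have "u ^ k = u ^ (k div 2 + k mod 2 + k div 2)" "v ^ j = v ^ (j div 2 + j mod 2 + j div 2)"
      by (rule arg_cong[where f = "(^) _"], presburger)+
    then show ?thesis unfolding w_def by (simp only: power_add mult_ac)
  qed
  have "positive_op (poly_op A (u ^ (k mod 2) * v ^ (j mod 2)))"
    using positive_unit_param positive_unit_coparam positive_unit_param_mult_coparam
    by (cases "even k"; cases "even j") (auto simp: u_def v_def mod2_eq_if)
  from positive_sandwich[OF selfadjoint_poly_op_between this] show ?thesis
    unfolding u_def[symmetric] v_def[symmetric] eq by (simp add: poly_op_mult)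
qed

end

section \<open>Bernstein polynomials on an interval\<close>

lemma sum_k_sq_Bernstein:
  "(\<Sum>k\<le>n. (real k)^2 * Bernstein n k x) = real n * (real n - 1) * x^2 + real n * x"
proof -
  have "(\<Sum>k\<le>n. (real k)^2 * Bernstein n k x)
      = (\<Sum>k\<le>n. real k * (real k - 1) * Bernstein n k x + real k * Bernstein n k x)"
    by (rule sum.cong) (auto simp: power2_eq_square algebra_simps)
  then show ?thesis by (simp add: sum.distrib)
qed

lemma sum_frac_Bernstein: "1 \<le> n \<Longrightarrow> (\<Sum>k\<le>n. (real k / real n) * Bernstein n k x) = x"
  by (simp flip: sum_divide_distrib)

lemma sum_frac_sq_Bernstein:
  assumes "1 \<le> n"
  shows "(\<Sum>k\<le>n. (real k / real n)^2 * Bernstein n k x) = x^2 + x * (1 - x) / real n"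
proof -
  have "(\<Sum>k\<le>n. (real k / real n)^2 * Bernstein n k x) = (\<Sum>k\<le>n. (real k)^2 * Bernstein n k x) / (real n)^2"
    by (simp add: sum_divide_distrib power_divide)
  also have "\<dots> = (real n * (real n - 1) * x^2 + real n * x) / (real n)^2"
    by (simp add: sum_k_sq_Bernstein)
  also have "\<dots> = x^2 + x * (1 - x) / real n"
    using assms by (simp add: field_simps power2_eq_square)
  finally show ?thesis .
qed

lemma sum_sum_frac_diff_sq_Bernstein:
  assumes n: "1 \<le> n" and m: "1 \<le> m"
  shows "(\<Sum>k\<le>n. \<Sum>j\<le>m. (real k / real n - real j / real m)^2 * (Bernstein n k x * Bernstein m j x))
         = (1 / real n + 1 / real m) * (x * (1 - x))"
proof -
  let ?B = "Bernstein"
  have "(\<Sum>k\<le>n. \<Sum>j\<le>m. (real k / real n - real j / real m)^2 * (?B n k x * ?B m j x))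
      = (\<Sum>k\<le>n. \<Sum>j\<le>m. ((real k / real n)^2 * ?B n k x) * ?B m j x
       - 2 * (((real k / real n) * ?B n k x) * ((real j / real m) * ?B m j x))
       + ?B n k x * ((real j / real m)^2 * ?B m j x))"
    by (intro sum.cong refl) (simp add: power2_eq_square algebra_simps)
  also have "\<dots> = (\<Sum>k\<le>n. \<Sum>j\<le>m. ((real k / real n)^2 * ?B n k x) * ?B m j x)
        - 2 * (\<Sum>k\<le>n. \<Sum>j\<le>m. ((real k / real n) * ?B n k x) * ((real j / real m) * ?B m j x))
        + (\<Sum>k\<le>n. \<Sum>j\<le>m. ?B n k x * ((real j / real m)^2 * ?B m j x))"
    by (simp only: sum.distrib sum_subtractf sum_distrib_left[symmetric])
  also have "\<dots> = (\<Sum>k\<le>n. (real k / real n)^2 * ?B n k x) * (\<Sum>j\<le>m. ?B m j x)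
        - 2 * ((\<Sum>k\<le>n. (real k / real n) * ?B n k x) * (\<Sum>j\<le>m. (real j / real m) * ?B m j x))
        + (\<Sum>k\<le>n. ?B n k x) * (\<Sum>j\<le>m. (real j / real m)^2 * ?B m j x)"
    by (simp only: sum_product)
  also have "\<dots> = (x^2 + x * (1 - x) / real n) * 1 - 2 * (x * x) + 1 * (x^2 + x * (1 - x) / real m)"
    by (simp only: sum_frac_sq_Bernstein[OF n] sum_frac_sq_Bernstein[OF m] sum_frac_Bernstein[OF n]
        sum_frac_Bernstein[OF m] sum_Bernstein)
  also have "\<dots> = (1 / real n + 1 / real m) * (x * (1 - x))"
    by (simp add: field_simps power2_eq_square)
  finally show ?thesis .
qed

text \<open>A uniform modulus of continuity of the form \<open>e + K d\<^sup>2\<close>: this is the shape in which the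
  Bernstein estimates consume continuity.\<close>

lemma compact_continuous_quadratic_modulus:
  fixes h :: "'a::metric_space \<Rightarrow> real"
  assumes S: "compact S" and cont: "continuous_on S h" and e: "0 < e"
  obtains K where "0 \<le> K" "\<And>x y. x \<in> S \<Longrightarrow> y \<in> S \<Longrightarrow> \<bar>h x - h y\<bar> \<le> e + K * (dist x y)^2"
proof -
  obtain d where d: "0 < d" and dd: "\<And>x y. x \<in> S \<Longrightarrow> y \<in> S \<Longrightarrow> dist y x < d \<Longrightarrow> dist (h y) (h x) < e"
    using compact_uniformly_continuous[OF cont S] e unfolding uniformly_continuous_on_def by metis
  obtain M where M: "\<And>x. x \<in> S \<Longrightarrow> \<bar>h x\<bar> \<le> M"
    using compact_imp_bounded[OF compact_continuous_image[OF cont S]] unfolding bounded_iff by auto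
  define K where "K = 2 * max M 0 / d^2"
  have K0: "0 \<le> K" using d by (simp add: K_def)
  have "\<bar>h x - h y\<bar> \<le> e + K * (dist x y)^2" if x: "x \<in> S" and y: "y \<in> S" for x y
  proof (cases "dist x y < d")
    case True
    then have "\<bar>h x - h y\<bar> < e" using dd[OF y x] by (simp add: dist_real_def dist_commute)
    then show ?thesis using K0 by (simp add: add_increasing2)
  next
    case False
    then have "K * d^2 \<le> K * (dist x y)^2"
      using d K0 by (intro mult_left_mono power_mono) auto
    moreover have "K * d^2 = 2 * max M 0" using d by (simp add: K_def)
    moreover have "\<bar>h x - h y\<bar> \<le> 2 * max M 0" using M[OF x] M[OF y] by linarith
    ultimately show ?thesis using e by linarith
  qed
  with K0 that show thesis by blast
qed

lemma interval_continuous_quadratic_modulus: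
  fixes f :: "real \<Rightarrow> real"
  assumes "continuous_on {a..b} f" "0 < e"
  obtains K where "0 \<le> K" "\<forall>x\<in>{a..b}. \<forall>y\<in>{a..b}. \<bar>f x - f y\<bar> \<le> e + K * (x - y)^2"
  using compact_continuous_quadratic_modulus[OF compact_Icc assms]
  by (metis dist_real_def power2_abs)

definition bernstein_node :: "real \<Rightarrow> real \<Rightarrow> nat \<Rightarrow> nat \<Rightarrow> real" where
  "bernstein_node a b n k = a + real k * (b - a) / real n"

definition bernstein_poly :: "(real \<Rightarrow> real) \<Rightarrow> real \<Rightarrow> real \<Rightarrow> nat \<Rightarrow> real poly" where
  "bernstein_poly f a b n = (\<Sum>k\<le>n. smult (f (bernstein_node a b n k) * real (n choose k))
     (unit_param a b ^ k * unit_coparam a b ^ (n - k)))"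

text \<open>Products of two Bernstein basis polynomials, of degrees \<open>n\<close> and \<open>m\<close>; they are all positive
  operators at \<open>A\<close>, and every product or difference of two Bernstein polynomials expands in them.\<close>

definition bernstein_pair :: "real \<Rightarrow> real \<Rightarrow> nat \<Rightarrow> nat \<Rightarrow> nat \<Rightarrow> nat \<Rightarrow> real poly" where
  "bernstein_pair a b n m k j = smult (real (n choose k) * real (m choose j))
     (unit_param a b ^ (k + j) * unit_coparam a b ^ ((n - k) + (m - j)))"

lemma bernstein_node_in: "a \<le> b \<Longrightarrow> k \<le> n \<Longrightarrow> bernstein_node a b n k \<in> {a..b}"
proof (cases "n = 0")
  case False
  assume ab: "a \<le> b" and kn: "k \<le> n"
  have "real k * (b - a) \<le> real n * (b - a)" using ab kn by (intro mult_right_mono) auto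
  then have "real k * (b - a) / real n \<le> b - a" using False by (simp add: field_simps)
  then show ?thesis using ab by (simp add: bernstein_node_def)
qed (simp add: bernstein_node_def)

lemma bernstein_node_diff:
  "bernstein_node a b n k - bernstein_node a b m j = (b - a) * (real k / real n - real j / real m)"
  by (simp add: bernstein_node_def algebra_simps)

lemma poly_op_bernstein_poly: "poly_op A (bernstein_poly f a b n) = bernstein_op f a b n A"
  by (simp add: bernstein_poly_def bernstein_op_def poly_op_sum poly_op_smult poly_op_mult
      poly_op_power poly_op_unit_param poly_op_unit_coparam bernstein_node_def)

lemma bernstein_poly_add: "bernstein_poly (\<lambda>x. f x + g x) a b n = bernstein_poly f a b n + bernstein_poly g a b n"
  by (simp add: bernstein_poly_def sum.distrib smult_add_left distrib_right)

lemma smult_sum_right: "smult c (\<Sum>i\<in>I. f i) = (\<Sum>i\<in>I. smult c (f i))"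
  by (induction I rule: infinite_finite_induct) (auto simp: smult_add_right)

lemma bernstein_poly_scale: "bernstein_poly (\<lambda>x. c * f x) a b n = smult c (bernstein_poly f a b n)"
  by (simp add: bernstein_poly_def smult_sum_right mult.assoc)

lemma bernstein_poly_cong:
  assumes "a \<le> b" "\<And>x. x \<in> {a..b} \<Longrightarrow> f x = g x"
  shows "bernstein_poly f a b n = bernstein_poly g a b n"
  unfolding bernstein_poly_def using assms bernstein_node_in by (intro sum.cong refl) auto

context
  fixes a b :: real
  assumes ab: "a < b"
begin

private abbreviation (input) "t x \<equiv> poly (unit_param a b) x"

lemma poly_bernstein_poly:
  "poly (bernstein_poly f a b n) x = (\<Sum>k\<le>n. f (bernstein_node a b n k) * Bernstein n k (t x))"
  by (simp add: bernstein_poly_def poly_sum Bernstein_def poly_unit_coparam[OF ab] mult_ac)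

lemma poly_bernstein_pair:
  "poly (bernstein_pair a b n m k j) x = Bernstein n k (t x) * Bernstein m j (t x)"
  by (simp add: bernstein_pair_def Bernstein_def poly_unit_coparam[OF ab] power_add mult_ac)

lemma poly_bernstein_pair_sum:
  "poly (\<Sum>k\<le>n. \<Sum>j\<le>m. smult (c k j) (bernstein_pair a b n m k j)) x
   = (\<Sum>k\<le>n. \<Sum>j\<le>m. c k j * (Bernstein n k (t x) * Bernstein m j (t x)))"
  by (simp only: poly_sum poly_smult poly_bernstein_pair)

lemma bernstein_poly_pair_expansion_left:
  "bernstein_poly f a b n = (\<Sum>k\<le>n. \<Sum>j\<le>m. smult (f (bernstein_node a b n k)) (bernstein_pair a b n m k j))"
proof (rule poly_eq_poly_eq_iff[THEN iffD1, OF ext])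
  fix x
  have "(\<Sum>k\<le>n. \<Sum>j\<le>m. f (bernstein_node a b n k) * (Bernstein n k (t x) * Bernstein m j (t x)))
      = (\<Sum>k\<le>n. f (bernstein_node a b n k) * Bernstein n k (t x) * (\<Sum>j\<le>m. Bernstein m j (t x)))"
    by (simp only: sum_distrib_left mult.assoc)
  then show "poly (bernstein_poly f a b n) x
      = poly (\<Sum>k\<le>n. \<Sum>j\<le>m. smult (f (bernstein_node a b n k)) (bernstein_pair a b n m k j)) x"
    by (simp add: poly_bernstein_pair_sum poly_bernstein_poly)
qed

lemma bernstein_poly_pair_expansion_right:
  "bernstein_poly f a b m = (\<Sum>k\<le>n. \<Sum>j\<le>m. smult (f (bernstein_node a b m j)) (bernstein_pair a b n m k j))"
proof (rule poly_eq_poly_eq_iff[THEN iffD1, OF ext])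
  fix x
  have "(\<Sum>k\<le>n. \<Sum>j\<le>m. f (bernstein_node a b m j) * (Bernstein n k (t x) * Bernstein m j (t x)))
      = (\<Sum>k\<le>n. Bernstein n k (t x)) * (\<Sum>j\<le>m. f (bernstein_node a b m j) * Bernstein m j (t x))"
    by (simp only: sum_product) (simp only: mult_ac)
  then show "poly (bernstein_poly f a b m) x
      = poly (\<Sum>k\<le>n. \<Sum>j\<le>m. smult (f (bernstein_node a b m j)) (bernstein_pair a b n m k j)) x"
    by (simp add: poly_bernstein_pair_sum poly_bernstein_poly)
qed

lemma bernstein_poly_mult_pair_expansion:
  "bernstein_poly f a b n * bernstein_poly g a b m
   = (\<Sum>k\<le>n. \<Sum>j\<le>m. smult (f (bernstein_node a b n k) * g (bernstein_node a b m j)) (bernstein_pair a b n m k j))"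
proof (rule poly_eq_poly_eq_iff[THEN iffD1, OF ext])
  fix x
  have "(\<Sum>k\<le>n. \<Sum>j\<le>m. (f (bernstein_node a b n k) * g (bernstein_node a b m j)) * (Bernstein n k (t x) * Bernstein m j (t x)))
      = (\<Sum>k\<le>n. f (bernstein_node a b n k) * Bernstein n k (t x)) * (\<Sum>j\<le>m. g (bernstein_node a b m j) * Bernstein m j (t x))"
    by (simp only: sum_product) (simp only: mult_ac)
  then show "poly (bernstein_poly f a b n * bernstein_poly g a b m) x
      = poly (\<Sum>k\<le>n. \<Sum>j\<le>m. smult (f (bernstein_node a b n k) * g (bernstein_node a b m j)) (bernstein_pair a b n m k j)) x"
    by (simp only: poly_bernstein_pair_sum poly_bernstein_poly poly_mult)
qed

lemma bernstein_poly_const: "bernstein_poly (\<lambda>x. c) a b n = [:c:]"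
  by (rule poly_eq_poly_eq_iff[THEN iffD1, OF ext]) (simp add: poly_bernstein_poly flip: sum_distrib_left)

lemma one_pair_expansion: "1 = (\<Sum>k\<le>n. \<Sum>j\<le>m. bernstein_pair a b n m k j)"
  using bernstein_poly_pair_expansion_left[of "\<lambda>_. 1" n m] by (simp add: bernstein_poly_const one_pCons)

lemma unit_param_mult_coparam_pair_expansion:
  assumes "1 \<le> n" "1 \<le> m"
  shows "smult (1 / real n + 1 / real m) (unit_param a b * unit_coparam a b)
       = (\<Sum>k\<le>n. \<Sum>j\<le>m. smult ((real k / real n - real j / real m)^2) (bernstein_pair a b n m k j))"
  by (rule poly_eq_poly_eq_iff[THEN iffD1, OF ext])
    (simp only: poly_bernstein_pair_sum sum_sum_frac_diff_sq_Bernstein[OF assms] poly_smult poly_mult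
      poly_unit_coparam[OF ab])

lemma bernstein_poly_id: "1 \<le> n \<Longrightarrow> bernstein_poly (\<lambda>x. x) a b n = [:0, 1:]"
proof (rule poly_eq_poly_eq_iff[THEN iffD1, OF ext])
  fix x assume n: "1 \<le> n"
  have "poly (bernstein_poly (\<lambda>x. x) a b n) x = (\<Sum>k\<le>n. (a + (b - a) * (real k / real n)) * Bernstein n k (t x))"
    by (simp add: poly_bernstein_poly bernstein_node_def algebra_simps)
  also have "\<dots> = a * (\<Sum>k\<le>n. Bernstein n k (t x)) + (b - a) * (\<Sum>k\<le>n. (real k / real n) * Bernstein n k (t x))"
    by (simp only: distrib_right sum.distrib sum_distrib_left mult.assoc)
  also have "\<dots> = a + (b - a) * t x" by (simp only: sum_Bernstein sum_frac_Bernstein[OF n] mult_1_right)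
  also have "\<dots> = x" using ab by (simp add: poly_unit_param)
  finally show "poly (bernstein_poly (\<lambda>x. x) a b n) x = poly [:0, 1:] x" by simp
qed

end

section \<open>Continuous functional calculus on an interval\<close>

definition fcalc :: "'a::real_normed_vector op \<Rightarrow> real \<Rightarrow> real \<Rightarrow> (real \<Rightarrow> real) \<Rightarrow> 'a op" where
  "fcalc A a b f = lim (\<lambda>n. poly_op A (bernstein_poly f a b n))"

lemma eventually_const_div_less:
  assumes "0 < r"
  shows "eventually (\<lambda>n. 1 \<le> n \<and> K / real n < r) sequentially"
proof -
  have "(\<lambda>n. K / real n) \<longlonglongrightarrow> 0" by (rule lim_const_over_n)
  from order_tendstoD(2)[OF this assms] eventually_ge_at_top[of 1]
  show ?thesis by eventually_elim simp
qed

lemma LIMSEQ_zero_if_norm_le_eps_plus_div: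
  fixes X :: "nat \<Rightarrow> 'b::real_normed_vector"
  assumes "\<And>e. 0 < e \<Longrightarrow> \<exists>K. \<forall>n\<ge>1. norm (X n) \<le> e + K / real n"
  shows "X \<longlonglongrightarrow> 0"
proof (rule tendstoI)
  fix r :: real assume r: "0 < r"
  obtain K where K: "\<forall>n\<ge>1. norm (X n) \<le> r / 2 + K / real n"
    using assms[of "r / 2"] r by auto
  have "eventually (\<lambda>n. 1 \<le> n \<and> K / real n < r / 2) sequentially"
    using r by (intro eventually_const_div_less) simp
  then show "eventually (\<lambda>n. dist (X n) 0 < r) sequentially"
  proof eventually_elim
    case (elim n)
    then have "norm (X n) \<le> r / 2 + K / real n" using K by simp
    with elim show ?case unfolding dist_norm diff_zero by linarith
  qed
qed

context
  fixes A :: "'a::{real_inner,complete_space} op" and a b :: real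
  assumes between: "quadform_between A a b" and ab: "a < b"
begin

private abbreviation (input) "P f n \<equiv> poly_op A (bernstein_poly f a b n)"

lemma positive_pair_sum:
  assumes "\<And>k j. k \<le> n \<Longrightarrow> j \<le> m \<Longrightarrow> 0 \<le> c k j"
  shows "positive_op (poly_op A (\<Sum>k\<le>n. \<Sum>j\<le>m. smult (c k j) (bernstein_pair a b n m k j)))"
  unfolding poly_op_sum poly_op_smult bernstein_pair_def using assms
  by (intro positive_sum positive_scaleR positive_unit_param_power_mult[OF between ab]) auto

text \<open>If the coefficients are bounded by \<open>e + K (k/n - j/m)\<^sup>2\<close>, then comparing with the positive
  combination with exactly these coefficients, whose value at \<open>A\<close> has norm at most
  \<open>e + K (1/n + 1/m)\<close>, bounds the norm from both sides.\<close>

lemma norm_pair_sum_le: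
  assumes n: "1 \<le> n" and m: "1 \<le> m" and e: "0 \<le> e" and K: "0 \<le> K"
    and d: "\<And>k j. k \<le> n \<Longrightarrow> j \<le> m \<Longrightarrow> \<bar>d k j\<bar> \<le> e + K * (real k / real n - real j / real m)^2"
  shows "norm (poly_op A (\<Sum>k\<le>n. \<Sum>j\<le>m. smult (d k j) (bernstein_pair a b n m k j)))
           \<le> e + K * (1 / real n + 1 / real m)"
proof -
  define D where "D = (\<Sum>k\<le>n. \<Sum>j\<le>m. smult (d k j) (bernstein_pair a b n m k j))"
  define c where "c = (\<lambda>k j. e + K * (real k / real n - real j / real m)^2)"
  define R where "R = smult e 1 + smult K (smult (1 / real n + 1 / real m) (unit_param a b * unit_coparam a b))"
  have R: "R = (\<Sum>k\<le>n. \<Sum>j\<le>m. smult (c k j) (bernstein_pair a b n m k j))"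
    unfolding R_def unit_param_mult_coparam_pair_expansion[OF ab n m] one_pair_expansion[OF ab, of n m] c_def
    by (simp add: smult_sum_right smult_add_left sum.distrib)
  have "R - D = (\<Sum>k\<le>n. \<Sum>j\<le>m. smult (c k j - d k j) (bernstein_pair a b n m k j))"
       "R + D = (\<Sum>k\<le>n. \<Sum>j\<le>m. smult (c k j + d k j) (bernstein_pair a b n m k j))"
    unfolding R D_def by (simp_all add: sum_subtractf smult_diff_left sum.distrib smult_add_left)
  moreover have "0 \<le> c k j - d k j" "0 \<le> c k j + d k j" if "k \<le> n" "j \<le> m" for k j
    using d[OF that] by (simp_all add: c_def abs_le_iff)
  ultimately have "positive_op (poly_op A (R - D))" "positive_op (poly_op A (R + D))"
    by (simp_all add: positive_pair_sum)
  then have "\<bar>inner (poly_op A D x) x\<bar> \<le> inner (poly_op A R x) x" for x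
    by (auto simp: positive_op_def poly_op_add poly_op_diff blinfun.bilinear_simps inner_add_left
        inner_diff_left abs_le_iff dest!: spec[of _ x])
  moreover have "inner (poly_op A R x) x \<le> (e + K * (1 / real n + 1 / real m)) * (norm x)^2" for x
  proof -
    have "inner (poly_op A R x) x = e * (norm x)^2
        + K * (1 / real n + 1 / real m) * inner (poly_op A (unit_param a b * unit_coparam a b) x) x"
      by (simp add: R_def poly_op_add poly_op_smult poly_op_const blinfun.bilinear_simps inner_add_left
          power2_norm_eq_inner)
    also have "\<dots> \<le> e * (norm x)^2 + (K * (1 / real n + 1 / real m)) * (norm x)^2"
      using K by (intro add_left_mono mult_left_mono inner_unit_param_mult_coparam_le[OF between ab]) auto
    finally show ?thesis by (simp add: algebra_simps)
  qed
  ultimately show ?thesis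
    unfolding D_def[symmetric] using e K
    by (intro norm_selfadjoint_le[OF selfadjoint_poly_op_between[OF between ab]]) (auto intro: order_trans)
qed

lemma norm_bernstein_diff_le:
  assumes n: "1 \<le> n" and m: "1 \<le> m" and e: "0 \<le> e" and K: "0 \<le> K"
    and f: "\<forall>x\<in>{a..b}. \<forall>y\<in>{a..b}. \<bar>f x - f y\<bar> \<le> e + K * (x - y)^2"
  shows "norm (P f n - P f m) \<le> e + (K * (b - a)^2) * (1 / real n + 1 / real m)"
proof -
  have eq: "bernstein_poly f a b n - bernstein_poly f a b m
      = (\<Sum>k\<le>n. \<Sum>j\<le>m. smult (f (bernstein_node a b n k) - f (bernstein_node a b m j)) (bernstein_pair a b n m k j))"
    by (simp only: bernstein_poly_pair_expansion_left[OF ab, of f n m]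
        bernstein_poly_pair_expansion_right[OF ab, of f m n] sum_subtractf[symmetric] smult_diff_left)
  have "norm (poly_op A (bernstein_poly f a b n - bernstein_poly f a b m))
      \<le> e + (K * (b - a)^2) * (1 / real n + 1 / real m)"
    unfolding eq
  proof (rule norm_pair_sum_le[OF n m e])
    fix k j assume "k \<le> n" "j \<le> m"
    then have "\<bar>f (bernstein_node a b n k) - f (bernstein_node a b m j)\<bar>
        \<le> e + K * (bernstein_node a b n k - bernstein_node a b m j)^2"
      using f bernstein_node_in ab by (meson less_imp_le)
    then show "\<bar>f (bernstein_node a b n k) - f (bernstein_node a b m j)\<bar>
        \<le> e + K * (b - a)^2 * (real k / real n - real j / real m)^2"
      by (simp add: bernstein_node_diff power_mult_distrib mult.assoc)
  qed (use K in simp)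
  then show ?thesis by (simp add: poly_op_diff)
qed

lemma Cauchy_bernstein:
  assumes cont: "continuous_on {a..b} f"
  shows "Cauchy (P f)"
proof (rule CauchyI)
  fix e :: real assume e: "0 < e"
  obtain K where K: "0 \<le> K" and Kf: "\<forall>x\<in>{a..b}. \<forall>y\<in>{a..b}. \<bar>f x - f y\<bar> \<le> e / 2 + K * (x - y)^2"
    using interval_continuous_quadratic_modulus[OF cont, of "e / 2"] e by auto
  define K' where "K' = K * (b - a)^2"
  obtain N where N: "\<And>n. N \<le> n \<Longrightarrow> 1 \<le> n \<and> K' / real n < e / 4"
    using eventually_const_div_less[of "e / 4" K'] e unfolding eventually_sequentially by auto
  have "norm (P f m - P f n) < e" if "N \<le> m" "N \<le> n" for m n
  proof -
    have "norm (P f m - P f n) \<le> e / 2 + K' * (1 / real m + 1 / real n)"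
      using norm_bernstein_diff_le[OF _ _ _ K Kf] N that e by (simp add: K'_def)
    also have "\<dots> = e / 2 + K' / real m + K' / real n" by (simp add: algebra_simps)
    finally show ?thesis using N[OF that(1)] N[OF that(2)] by linarith
  qed
  then show "\<exists>M. \<forall>m\<ge>M. \<forall>n\<ge>M. norm (P f m - P f n) < e" by blast
qed

lemma bernstein_LIMSEQ_fcalc:
  assumes "continuous_on {a..b} f"
  shows "P f \<longlonglongrightarrow> fcalc A a b f"
  unfolding fcalc_def using blinfun_Cauchy_convergent[OF Cauchy_bernstein[OF assms]]
  by (rule convergent_LIMSEQ_iff[THEN iffD1])

lemma norm_bernstein_fcalc_le:
  assumes cont: "continuous_on {a..b} f" and n: "1 \<le> n" and e: "0 \<le> e" and K: "0 \<le> K"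
    and f: "\<forall>x\<in>{a..b}. \<forall>y\<in>{a..b}. \<bar>f x - f y\<bar> \<le> e + K * (x - y)^2"
  shows "norm (P f n - fcalc A a b f) \<le> e + (K * (b - a)^2) / real n"
proof -
  have "(\<lambda>m. norm (P f n - P f m)) \<longlonglongrightarrow> norm (P f n - fcalc A a b f)"
    by (intro tendsto_intros bernstein_LIMSEQ_fcalc[OF cont])
  moreover have "(\<lambda>m. e + (K * (b - a)^2) * (1 / real n + 1 / real m)) \<longlonglongrightarrow> e + (K * (b - a)^2) * (1 / real n + 0)"
    by (intro tendsto_intros)
  ultimately have "norm (P f n - fcalc A a b f) \<le> e + (K * (b - a)^2) * (1 / real n + 0)"
    by (rule LIMSEQ_le) (use norm_bernstein_diff_le[OF n _ e K f] in auto)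
  then show ?thesis by simp
qed

lemma selfadjoint_fcalc:
  assumes "continuous_on {a..b} f"
  shows "selfadjoint (fcalc A a b f)"
  by (rule selfadjoint_limit[OF bernstein_LIMSEQ_fcalc[OF assms]]) (rule selfadjoint_poly_op_between[OF between ab])

lemma positive_fcalc:
  assumes "continuous_on {a..b} f" and pos: "\<And>x. x \<in> {a..b} \<Longrightarrow> 0 \<le> f x"
  shows "positive_op (fcalc A a b f)"
proof (rule positive_limit[OF bernstein_LIMSEQ_fcalc[OF assms(1)]])
  fix n
  show "positive_op (P f n)"
    unfolding bernstein_poly_pair_expansion_left[OF ab, of f n n]
    by (rule positive_pair_sum) (use pos bernstein_node_in ab in auto)
qed

lemma fcalc_cong: "(\<And>x. x \<in> {a..b} \<Longrightarrow> f x = g x) \<Longrightarrow> fcalc A a b f = fcalc A a b g"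
  unfolding fcalc_def using bernstein_poly_cong[of a b f g] ab by simp

lemma fcalc_add:
  assumes "continuous_on {a..b} f" "continuous_on {a..b} g"
  shows "fcalc A a b (\<lambda>x. f x + g x) = fcalc A a b f + fcalc A a b g"
proof -
  have "P (\<lambda>x. f x + g x) \<longlonglongrightarrow> fcalc A a b f + fcalc A a b g"
    unfolding bernstein_poly_add poly_op_add by (intro tendsto_add bernstein_LIMSEQ_fcalc assms)
  moreover have "P (\<lambda>x. f x + g x) \<longlonglongrightarrow> fcalc A a b (\<lambda>x. f x + g x)"
    by (intro bernstein_LIMSEQ_fcalc continuous_on_add assms)
  ultimately show ?thesis by (metis LIMSEQ_unique)
qed

lemma fcalc_scale:
  assumes "continuous_on {a..b} f"
  shows "fcalc A a b (\<lambda>x. c * f x) = c *\<^sub>R fcalc A a b f"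
proof -
  have "P (\<lambda>x. c * f x) \<longlonglongrightarrow> c *\<^sub>R fcalc A a b f"
    unfolding bernstein_poly_scale poly_op_smult by (intro tendsto_scaleR tendsto_const bernstein_LIMSEQ_fcalc assms)
  moreover have "P (\<lambda>x. c * f x) \<longlonglongrightarrow> fcalc A a b (\<lambda>x. c * f x)"
    by (intro bernstein_LIMSEQ_fcalc continuous_on_mult continuous_on_const assms)
  ultimately show ?thesis by (metis LIMSEQ_unique)
qed

lemma fcalc_const: "fcalc A a b (\<lambda>x. c) = c *\<^sub>R id_blinfun"
  unfolding fcalc_def bernstein_poly_const[OF ab] poly_op_const by simp

lemma fcalc_id: "fcalc A a b (\<lambda>x. x) = A"
proof -
  have "P (\<lambda>x. x) \<longlonglongrightarrow> A"
    by (rule LIMSEQ_offset[where k = 1]) (simp add: bernstein_poly_id[OF ab] poly_op_X)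
  moreover have "P (\<lambda>x. x) \<longlonglongrightarrow> fcalc A a b (\<lambda>x. x)"
    by (intro bernstein_LIMSEQ_fcalc continuous_on_id)
  ultimately show ?thesis by (metis LIMSEQ_unique)
qed

text \<open>Multiplicativity: \<open>B\<^sub>n(f) B\<^sub>n(g) - B\<^sub>n(f g)\<close> expands in the Bernstein pairs with coefficients
  \<open>f(x\<^sub>k) (g(x\<^sub>j) - g(x\<^sub>k))\<close>, so \<open>norm_pair_sum_le\<close> makes it tend to zero.\<close>

lemma norm_bernstein_mult_diff_le:
  assumes M: "\<forall>x\<in>{a..b}. \<bar>f x\<bar> \<le> M" and e: "0 \<le> e" and K: "0 \<le> K"
    and g: "\<forall>x\<in>{a..b}. \<forall>y\<in>{a..b}. \<bar>g x - g y\<bar> \<le> e + K * (x - y)^2" and n: "1 \<le> n"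
  shows "norm (poly_op A (bernstein_poly f a b n * bernstein_poly g a b n) - P (\<lambda>x. f x * g x) n)
           \<le> M * e + 2 * M * K * (b - a)^2 / real n"
proof -
  let ?x = "bernstein_node a b n"
  have M0: "0 \<le> M" using M[rule_format, of a] ab by auto
  have eq: "bernstein_poly f a b n * bernstein_poly g a b n - bernstein_poly (\<lambda>x. f x * g x) a b n
      = (\<Sum>k\<le>n. \<Sum>j\<le>n. smult (f (?x k) * (g (?x j) - g (?x k))) (bernstein_pair a b n n k j))"
    by (simp only: bernstein_poly_mult_pair_expansion[OF ab] bernstein_poly_pair_expansion_left[OF ab, of "\<lambda>x. f x * g x" n n]
        sum_subtractf[symmetric] smult_diff_left[symmetric] right_diff_distrib)
  have "norm (poly_op A (bernstein_poly f a b n * bernstein_poly g a b n - bernstein_poly (\<lambda>x. f x * g x) a b n))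
      \<le> M * e + (M * K * (b - a)^2) * (1 / real n + 1 / real n)"
    unfolding eq
  proof (rule norm_pair_sum_le[OF n n])
    fix k j assume "k \<le> n" "j \<le> n"
    then have xk: "?x k \<in> {a..b}" and xj: "?x j \<in> {a..b}" using bernstein_node_in ab by auto
    have "\<bar>f (?x k) * (g (?x j) - g (?x k))\<bar> \<le> M * (e + K * (?x j - ?x k)^2)"
      unfolding abs_mult using M xk g xj by (intro mult_mono) auto
    also have "(?x j - ?x k)^2 = (b - a)^2 * (real k / real n - real j / real n)^2"
      by (simp add: bernstein_node_diff power_mult_distrib power2_commute)
    finally show "\<bar>f (?x k) * (g (?x j) - g (?x k))\<bar> \<le> M * e + M * K * (b - a)^2 * (real k / real n - real j / real n)^2"
      by (simp add: algebra_simps)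
  qed (use M0 e K in simp_all)
  then show ?thesis by (simp add: poly_op_diff field_simps)
qed

lemma fcalc_mult:
  assumes cf: "continuous_on {a..b} f" and cg: "continuous_on {a..b} g"
  shows "fcalc A a b f o\<^sub>L fcalc A a b g = fcalc A a b (\<lambda>x. f x * g x)"
proof -
  obtain M where M: "\<forall>x\<in>{a..b}. \<bar>f x\<bar> \<le> M"
    using compact_imp_bounded[OF compact_continuous_image[OF cf compact_Icc]] unfolding bounded_iff by auto
  have M0: "0 \<le> M" using M ab by force
  define D where "D = (\<lambda>n. poly_op A (bernstein_poly f a b n * bernstein_poly g a b n) - P (\<lambda>x. f x * g x) n)"
  have "D \<longlonglongrightarrow> 0"
  proof (rule LIMSEQ_zero_if_norm_le_eps_plus_div)
    fix e :: real assume e: "0 < e"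
    obtain K where K: "0 \<le> K" and Kg: "\<forall>x\<in>{a..b}. \<forall>y\<in>{a..b}. \<bar>g x - g y\<bar> \<le> e / (M + 1) + K * (x - y)^2"
      using interval_continuous_quadratic_modulus[OF cg, of "e / (M + 1)"] e M0 by auto
    have "M * (e / (M + 1)) \<le> e" using e M0 by (simp add: field_simps)
    then show "\<exists>K. \<forall>n\<ge>1. norm (D n) \<le> e + K / real n"
      using norm_bernstein_mult_diff_le[OF M _ K Kg] e M0 unfolding D_def
      by (intro exI[of _ "2 * M * K * (b - a)^2"]) (force intro: order_trans)
  qed
  moreover have "(\<lambda>n. poly_op A (bernstein_poly f a b n * bernstein_poly g a b n))
      \<longlonglongrightarrow> (fcalc A a b f o\<^sub>L fcalc A a b g)"
    unfolding poly_op_mult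
    by (rule blinfun_compose.tendsto[OF bernstein_LIMSEQ_fcalc[OF cf] bernstein_LIMSEQ_fcalc[OF cg]])
  ultimately have "(\<lambda>n. poly_op A (bernstein_poly f a b n * bernstein_poly g a b n) - D n)
      \<longlonglongrightarrow> (fcalc A a b f o\<^sub>L fcalc A a b g) - 0"
    by (intro tendsto_diff)
  then have "P (\<lambda>x. f x * g x) \<longlonglongrightarrow> (fcalc A a b f o\<^sub>L fcalc A a b g)"
    by (simp add: D_def)
  moreover have "P (\<lambda>x. f x * g x) \<longlonglongrightarrow> fcalc A a b (\<lambda>x. f x * g x)"
    by (intro bernstein_LIMSEQ_fcalc continuous_on_mult cf cg)
  ultimately show ?thesis by (metis LIMSEQ_unique)
qed

end

section \<open>The functional calculus of a positive invertible operator\<close>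

lemma inv_op_inverse:
  assumes "invertible_op A"
  shows compose_inv_op: "A o\<^sub>L inv_op A = id_blinfun" and inv_op_compose: "inv_op A o\<^sub>L A = id_blinfun"
proof -
  obtain B where B: "A o\<^sub>L B = id_blinfun" "B o\<^sub>L A = id_blinfun"
    using assms by (auto simp: invertible_op_def)
  have uniq: "C = B" if "A o\<^sub>L C = id_blinfun \<and> C o\<^sub>L A = id_blinfun" for C
  proof -
    have "C = (B o\<^sub>L A) o\<^sub>L C" using B by simp
    also have "\<dots> = B" using that by (simp add: blinfun_compose_assoc)
    finally show ?thesis .
  qed
  have "inv_op A = B"
    unfolding inv_op_def by (rule the_equality) (use B uniq in blast)+
  with B show "A o\<^sub>L inv_op A = id_blinfun" "inv_op A o\<^sub>L A = id_blinfun" by simp_all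
qed

lemma apply_inv_op:
  assumes "invertible_op A"
  shows "A (inv_op A x) = x" "inv_op A (A x) = x"
proof -
  have "(A o\<^sub>L inv_op A) x = x" "(inv_op A o\<^sub>L A) x = x"
    by (simp_all add: compose_inv_op[OF assms] inv_op_compose[OF assms])
  then show "A (inv_op A x) = x" "inv_op A (A x) = x" by simp_all
qed

lemma positive_inv_op:
  assumes P: "positive_op A" and I: "invertible_op A"
  shows "positive_op (inv_op A)"
proof -
  have sa: "selfadjoint A" using P by (simp add: positive_op_def)
  have "inner (inv_op A x) y = inner x (inv_op A y)" for x y
  proof -
    have "inner (inv_op A x) y = inner (inv_op A x) (A (inv_op A y))" by (simp add: apply_inv_op[OF I])
    also have "\<dots> = inner (A (inv_op A x)) (inv_op A y)" using sa by (simp add: selfadjoint_def)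
    finally show ?thesis by (simp add: apply_inv_op[OF I])
  qed
  moreover have "0 \<le> inner (inv_op A x) x" for x
  proof -
    have "inner (inv_op A x) x = inner (A (inv_op A x)) (inv_op A x)"
      by (simp add: apply_inv_op[OF I] inner_commute)
    then show ?thesis using P by (simp add: positive_op_def)
  qed
  ultimately show ?thesis by (simp add: positive_op_def selfadjoint_def)
qed

definition spectral_lb :: "'a::real_normed_vector op \<Rightarrow> real" where
  "spectral_lb A = 1 / norm (inv_op A)"

definition spectral_ub :: "'a::real_normed_vector op \<Rightarrow> real" where
  "spectral_ub A = norm A"

text \<open>On the zero space \<open>norm (inv_op A) = 0\<close>, so \<open>spectral_lb A = 1 / 0 = 0\<close>; hence the hypothesis of a
  nonzero vector.\<close>

context
  fixes A :: "'a::{real_inner,complete_space} op"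
  assumes P: "positive_op A" and I: "invertible_op A" and nontrivial: "\<exists>x::'a. x \<noteq> 0"
begin

private abbreviation (input) "lo \<equiv> spectral_lb A"
private abbreviation (input) "hi \<equiv> spectral_ub A"

lemma spectral_lb_pos: "0 < spectral_lb A"
proof -
  obtain x :: 'a where "x \<noteq> 0" using nontrivial by blast
  then have "inv_op A \<noteq> 0"
    using apply_inv_op(2)[OF I, of x] by auto
  then show ?thesis by (simp add: spectral_lb_def)
qed

lemma quadform_between_spectral: "quadform_between A (spectral_lb A) (spectral_ub A)"
proof -
  have "lo * (norm x)^2 \<le> inner (A x) x" for x
  proof -
    have "(norm (inv_op A (A x)))^2 \<le> norm (inv_op A) * inner (inv_op A (A x)) (A x)"
      by (rule norm_apply_positive_sq[OF positive_inv_op[OF P I]])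
    then have "(norm x)^2 \<le> norm (inv_op A) * inner (A x) x"
      by (simp add: apply_inv_op[OF I] inner_commute)
    then show ?thesis using spectral_lb_pos by (simp add: spectral_lb_def field_simps)
  qed
  moreover have "inner (A x) x \<le> hi * (norm x)^2" for x
  proof -
    have "inner (A x) x \<le> norm (A x) * norm x" by (rule norm_cauchy_schwarz)
    also have "\<dots> \<le> norm A * norm x * norm x" by (intro mult_right_mono norm_blinfun) simp
    finally show ?thesis by (simp add: spectral_ub_def power2_eq_square mult.assoc)
  qed
  ultimately show ?thesis using P by (simp add: quadform_between_def positive_op_def)
qed

lemma spectral_lb_le_ub: "spectral_lb A \<le> spectral_ub A"
proof -
  obtain x :: 'a where "x \<noteq> 0" using nontrivial by blast
  moreover have "lo * (norm x)^2 \<le> hi * (norm x)^2"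
    using quadform_between_spectral unfolding quadform_between_def by (meson order_trans)
  ultimately show ?thesis by simp
qed

lemma eq_scaleR_id_if_spectral_lb_eq_ub:
  assumes eq: "spectral_lb A = spectral_ub A"
  shows "A = spectral_lb A *\<^sub>R id_blinfun"
proof -
  have "norm (A - lo *\<^sub>R id_blinfun) \<le> 0"
  proof (rule norm_selfadjoint_le)
    show "selfadjoint (A - lo *\<^sub>R id_blinfun)"
      using P by (intro selfadjoint_diff selfadjoint_scaleR selfadjoint_id) (simp add: positive_op_def)
    fix x
    show "\<bar>inner ((A - lo *\<^sub>R id_blinfun) x) x\<bar> \<le> 0 * (norm x)^2"
      using quadform_between_spectral eq
      by (simp add: quadform_between_def blinfun.bilinear_simps inner_diff_left power2_norm_eq_inner)
  qed simp
  then show ?thesis by simp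
qed

lemma opfun_eq_fcalc: "spectral_lb A < spectral_ub A \<Longrightarrow> opfun f A = fcalc A (spectral_lb A) (spectral_ub A) f"
  unfolding opfun_def fcalc_def spectral_lb_def spectral_ub_def Let_def by (simp add: poly_op_bernstein_poly)

lemma opfun_eq_scaleR_id: "spectral_lb A = spectral_ub A \<Longrightarrow> opfun f A = f (spectral_lb A) *\<^sub>R id_blinfun"
  unfolding opfun_def spectral_lb_def spectral_ub_def Let_def by simp

lemma continuous_on_spectral_interval:
  "continuous_on {0<..} f \<Longrightarrow> continuous_on {spectral_lb A..spectral_ub A} f"
  by (rule continuous_on_subset) (use spectral_lb_pos in auto)

text \<open>Each property of \<open>opfun\<close> below is inherited from \<open>fcalc\<close> when the spectral bounds differ,
  and is trivial for the scalar operator left when they coincide.\<close>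

lemma opfun_cases:
  obtains "spectral_lb A < spectral_ub A" "\<And>f. opfun f A = fcalc A (spectral_lb A) (spectral_ub A) f"
  | "spectral_lb A = spectral_ub A" "\<And>f. opfun f A = f (spectral_lb A) *\<^sub>R id_blinfun"
proof (cases "spectral_lb A = spectral_ub A")
  case True
  show ?thesis by (rule that(2)[OF True opfun_eq_scaleR_id[OF True]])
next
  case False
  with spectral_lb_le_ub have lt: "spectral_lb A < spectral_ub A" by simp
  show ?thesis by (rule that(1)[OF lt opfun_eq_fcalc[OF lt]])
qed

lemma selfadjoint_opfun:
  assumes "continuous_on {0<..} f"
  shows "selfadjoint (opfun f A)"
proof (cases rule: opfun_cases)
  case 1
  show ?thesis unfolding 1(2)
    by (rule selfadjoint_fcalc[OF quadform_between_spectral 1(1) continuous_on_spectral_interval[OF assms]])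
qed (simp add: selfadjoint_scaleR)

lemma positive_opfun:
  assumes "continuous_on {0<..} f" "\<And>x. 0 < x \<Longrightarrow> 0 \<le> f x"
  shows "positive_op (opfun f A)"
proof (cases rule: opfun_cases)
  case 1
  show ?thesis unfolding 1(2)
  proof (rule positive_fcalc[OF quadform_between_spectral 1(1) continuous_on_spectral_interval[OF assms(1)]])
    show "0 \<le> f x" if "x \<in> {spectral_lb A..spectral_ub A}" for x
      using that spectral_lb_pos assms(2) by simp
  qed
qed (use spectral_lb_pos assms in \<open>simp add: positive_scaleR\<close>)

lemma opfun_cong:
  assumes "\<And>x. 0 < x \<Longrightarrow> f x = g x"
  shows "opfun f A = opfun g A"
proof (cases rule: opfun_cases)
  case 1
  show ?thesis unfolding 1(2)
    by (rule fcalc_cong[OF quadform_between_spectral 1(1)]) (use spectral_lb_pos assms in simp)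
qed (use spectral_lb_pos assms in simp)

lemma opfun_add:
  assumes "continuous_on {0<..} f" "continuous_on {0<..} g"
  shows "opfun (\<lambda>x. f x + g x) A = opfun f A + opfun g A"
proof (cases rule: opfun_cases)
  case 1
  show ?thesis unfolding 1(2)
    by (rule fcalc_add[OF quadform_between_spectral 1(1)]) (use assms continuous_on_spectral_interval in simp_all)
qed (simp add: scaleR_add_left)

lemma opfun_scale:
  assumes "continuous_on {0<..} f"
  shows "opfun (\<lambda>x. c * f x) A = c *\<^sub>R opfun f A"
proof (cases rule: opfun_cases)
  case 1
  show ?thesis unfolding 1(2)
    by (rule fcalc_scale[OF quadform_between_spectral 1(1) continuous_on_spectral_interval[OF assms]])
qed simp

lemma opfun_diff:
  assumes "continuous_on {0<..} f" "continuous_on {0<..} g"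
  shows "opfun (\<lambda>x. f x - g x) A = opfun f A - opfun g A"
proof -
  have "opfun (\<lambda>x. f x + (-1) * g x) A = opfun f A + opfun (\<lambda>x. (-1) * g x) A"
    using assms by (intro opfun_add continuous_intros)
  then show ?thesis using opfun_scale[OF assms(2), of "-1"] by simp
qed

lemma opfun_const: "opfun (\<lambda>x. c) A = c *\<^sub>R id_blinfun"
  by (cases rule: opfun_cases) (simp_all add: fcalc_const[OF quadform_between_spectral])

lemma opfun_id: "opfun (\<lambda>x. x) A = A"
proof (cases rule: opfun_cases)
  case 2
  with eq_scaleR_id_if_spectral_lb_eq_ub show ?thesis by metis
qed (simp add: fcalc_id[OF quadform_between_spectral])

lemma opfun_mult:
  assumes "continuous_on {0<..} f" "continuous_on {0<..} g"
  shows "opfun f A o\<^sub>L opfun g A = opfun (\<lambda>x. f x * g x) A"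
proof (cases rule: opfun_cases)
  case 1
  show ?thesis unfolding 1(2)
    by (rule fcalc_mult[OF quadform_between_spectral 1(1)]) (use assms continuous_on_spectral_interval in simp_all)
qed (simp add: blinfun_compose_simps)

end

section \<open>The scalar inequality\<close>

lemma le_sinh_mult_cosh:
  fixes w :: real
  assumes "0 \<le> w"
  shows "w \<le> sinh w * cosh w"
proof -
  have "2 * w \<le> (exp (2 * w) - inverse (exp (2 * w))) / 2" by (rule real_le_x_sinh) (use assms in simp)
  also have "\<dots> = sinh (2 * w)" by (simp add: sinh_field_def exp_minus)
  also have "\<dots> = 2 * (sinh w * cosh w)" by (simp add: sinh_double)
  finally show ?thesis by simp
qed

text \<open>\<open>w coth w\<close> is increasing on \<open>w > 0\<close>, stated without division.\<close>

lemma mult_coth_mono: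
  fixes z s :: real
  assumes z: "0 < z" and zs: "z \<le> s"
  shows "z * cosh z * sinh s \<le> s * cosh s * sinh z"
proof -
  define g where "g = (\<lambda>w::real. w * cosh w / sinh w)"
  have deriv: "(g has_real_derivative ((sinh w * cosh w - w) / (sinh w)^2)) (at w)" if w: "w \<in> {z..s}" for w
  proof -
    have wp: "0 < w" using w z by auto
    have e: "((1 * cosh w + sinh w * 1 * w) * sinh w - w * cosh w * (cosh w * 1)) / (sinh w * sinh w)
        = (sinh w * cosh w - w) / (sinh w)^2"
    proof -
      have "(1 * cosh w + sinh w * 1 * w) * sinh w - w * cosh w * (cosh w * 1)
          = sinh w * cosh w - w * ((cosh w)^2 - (sinh w)^2)"
        by (simp add: power2_eq_square algebra_simps)
      also have "\<dots> = sinh w * cosh w - w" by (simp add: hyperbolic_pythagoras)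
      finally show ?thesis by (simp add: power2_eq_square)
    qed
    show ?thesis unfolding g_def
      by (rule derivative_eq_intros refl | simp add: wp)+ (use wp in simp, fact e)
  qed
  have "g z \<le> g s"
  proof (rule deriv_nonneg_imp_mono[OF deriv _ zs])
    fix w assume "w \<in> {z..s}"
    then show "0 \<le> (sinh w * cosh w - w) / (sinh w)^2" using z le_sinh_mult_cosh[of w] by simp
  qed
  moreover have "0 < sinh z" "0 < sinh s" using z zs by auto
  ultimately show ?thesis by (simp add: g_def field_simps)
qed

lemma mult_coth_cosh_sq_mono:
  fixes z s :: real
  assumes z: "0 \<le> z" and zs: "z \<le> s"
  shows "z * sinh s * (cosh z)^3 \<le> s * (cosh s)^3 * sinh z"
proof (cases "z = 0")
  case False
  then have zp: "0 < z" using z by simp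
  have "(cosh z)^2 \<le> (cosh s)^2"
    using zp zs by (intro power_mono) (auto simp: cosh_real_nonneg_le_iff)
  then have "(z * cosh z * sinh s) * (cosh z)^2 \<le> (s * cosh s * sinh z) * (cosh s)^2"
    by (rule mult_mono[OF mult_coth_mono[OF zp zs]]) (use zp zs in auto)
  then show ?thesis by (simp add: power2_eq_square power3_eq_cube mult_ac)
qed (use zs in simp)

text \<open>The function \<open>\<psi>(w) = s cosh\<^sup>2 s / cosh\<^sup>2 w + (tanh s) w\<^sup>2\<close> decreases on \<open>[0, s]\<close>; comparing
  \<open>\<psi>(s) \<le> \<psi>(d)\<close> gives the inequality.\<close>

lemma sq_diff_mult_sinh_cosh_sq_le:
  fixes d s :: real
  assumes d: "0 \<le> d" and ds: "d \<le> s" and s: "0 < s"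
  shows "(s^2 - d^2) * sinh s * (cosh d)^2 \<le> s * cosh s * ((cosh s)^2 - (cosh d)^2)"
proof -
  define T where "T = sinh s / cosh s"
  define \<psi> where "\<psi> = (\<lambda>w::real. s * (cosh s)^2 / (cosh w)^2 + T * w^2)"
  have deriv: "(\<psi> has_real_derivative (- 2 * s * (cosh s)^2 * sinh w / (cosh w)^3 + 2 * T * w)) (at w)" for w
    unfolding \<psi>_def
    by (rule derivative_eq_intros refl | simp)+
      (simp add: field_simps power2_eq_square power3_eq_cube eval_nat_numeral)
  have "\<psi> s \<le> \<psi> d"
  proof (rule deriv_nonpos_imp_antimono[OF deriv _ ds])
    fix w assume "w \<in> {d..s}"
    then have "w * sinh s * (cosh w)^3 \<le> s * (cosh s)^3 * sinh w"
      using d by (intro mult_coth_cosh_sq_mono) auto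
    then have "T * w \<le> s * (cosh s)^2 * sinh w / (cosh w)^3"
      by (simp add: T_def field_simps power2_eq_square power3_eq_cube)
    then show "- 2 * s * (cosh s)^2 * sinh w / (cosh w)^3 + 2 * T * w \<le> 0" by simp
  qed
  then have "(s + T * s^2) * (cosh s * (cosh d)^2)
      \<le> (s * (cosh s)^2 / (cosh d)^2 + T * d^2) * (cosh s * (cosh d)^2)"
    by (intro mult_right_mono) (simp_all add: \<psi>_def)
  moreover have "(s + T * s^2) * (cosh s * (cosh d)^2) = s * cosh s * (cosh d)^2 + s^2 * sinh s * (cosh d)^2"
    by (simp add: T_def field_simps)
  moreover have "(s * (cosh s)^2 / (cosh d)^2 + T * d^2) * (cosh s * (cosh d)^2)
      = s * cosh s * (cosh s)^2 + d^2 * sinh s * (cosh d)^2"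
    by (simp add: T_def field_simps power2_eq_square)
  moreover have "(s^2 - d^2) * sinh s * (cosh d)^2 = s^2 * sinh s * (cosh d)^2 - d^2 * sinh s * (cosh d)^2"
    "s * cosh s * ((cosh s)^2 - (cosh d)^2) = s * cosh s * (cosh s)^2 - s * cosh s * (cosh d)^2"
    by (simp_all add: algebra_simps)
  ultimately show ?thesis by linarith
qed

text \<open>The previous inequality at the half angles \<open>s/2\<close>, \<open>d/2\<close>.\<close>

lemma hyperbolic_ineq_nonneg:
  fixes d s :: real
  assumes d: "0 \<le> d" and ds: "d \<le> s" and s: "0 < s"
  shows "(s^2 - d^2) * (cosh s - 1) * (1 + cosh d) \<le> 2 * s * sinh s * (cosh s - cosh d)"
proof -
  define a b where "a = s / 2" and "b = d / 2"
  have sd: "s = 2 * a" "d = 2 * b" by (auto simp: a_def b_def)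
  have "(a^2 - b^2) * sinh a * (cosh b)^2 \<le> a * cosh a * ((cosh a)^2 - (cosh b)^2)"
    using d ds s by (intro sq_diff_mult_sinh_cosh_sq_le) (auto simp: a_def b_def)
  moreover have "0 \<le> sinh a" using s by (simp add: a_def)
  ultimately have ineq: "16 * sinh a * ((a^2 - b^2) * sinh a * (cosh b)^2)
      \<le> 16 * sinh a * (a * cosh a * ((cosh a)^2 - (cosh b)^2))"
    by (intro mult_left_mono) auto
  have e1: "cosh s - 1 = 2 * (sinh a)^2" unfolding sd cosh_double_cosh by (simp add: cosh_square_eq)
  have e2: "1 + cosh d = 2 * (cosh b)^2" unfolding sd cosh_double_cosh by simp
  have e3: "sinh s = 2 * sinh a * cosh a" unfolding sd sinh_double ..
  have e4: "cosh s - cosh d = 2 * ((cosh a)^2 - (cosh b)^2)" unfolding sd cosh_double_cosh by simp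
  have "(s^2 - d^2) * (cosh s - 1) * (1 + cosh d) = 16 * sinh a * ((a^2 - b^2) * sinh a * (cosh b)^2)"
    unfolding e1 e2 unfolding sd by (simp add: algebra_simps power2_eq_square)
  moreover have "2 * s * sinh s * (cosh s - cosh d) = 16 * sinh a * (a * cosh a * ((cosh a)^2 - (cosh b)^2))"
    unfolding e3 e4 unfolding sd by (simp add: algebra_simps power2_eq_square)
  ultimately show ?thesis using ineq by (simp only:)
qed

lemma hyperbolic_ineq:
  fixes d s :: real
  assumes "\<bar>d\<bar> \<le> \<bar>s\<bar>" "s \<noteq> 0"
  shows "(s^2 - d^2) * (cosh s - 1) * (1 + cosh d) \<le> 2 * s * sinh s * (cosh s - cosh d)"
proof -
  have "(\<bar>s\<bar>^2 - \<bar>d\<bar>^2) * (cosh \<bar>s\<bar> - 1) * (1 + cosh \<bar>d\<bar>) \<le> 2 * \<bar>s\<bar> * sinh \<bar>s\<bar> * (cosh \<bar>s\<bar> - cosh \<bar>d\<bar>)"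
    by (rule hyperbolic_ineq_nonneg) (use assms in auto)
  moreover have "2 * \<bar>s\<bar> * sinh \<bar>s\<bar> * (cosh \<bar>s\<bar> - cosh \<bar>d\<bar>) = 2 * s * sinh s * (cosh s - cosh d)"
    by (cases "0 \<le> s") auto
  moreover have "(\<bar>s\<bar>^2 - \<bar>d\<bar>^2) * (cosh \<bar>s\<bar> - 1) * (1 + cosh \<bar>d\<bar>) = (s^2 - d^2) * (cosh s - 1) * (1 + cosh d)"
    by simp
  ultimately show ?thesis by (simp only:)
qed

text \<open>The inequality \<open>f\<^sub>p(x) \<le> 2p(1-p)(x\<^sup>1\<^sup>/\<^sup>2 - 1)\<^sup>2/2 + f\<^sub>0(x)\<close> after the substitution
  \<open>x = e\<^sup>2\<^sup>s\<close>, \<open>p = (1 + d/s)/2\<close>, and division by \<open>e\<^sup>s\<close>.\<close>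

lemma hyperbolic_WYD_ineq:
  fixes d s :: real
  assumes ds: "\<bar>d\<bar> < \<bar>s\<bar>"
  shows "(s^2 - d^2) * (sinh s)^2 / (2 * s^2 * (cosh s - cosh d))
         \<le> (s^2 - d^2) * (cosh s - 1) / (2 * s^2) + sinh s / s"
proof -
  define P C D S where "P = s^2 - d^2" and "C = cosh s" and "D = cosh d" and "S = sinh s"
  have s0: "s \<noteq> 0" using ds by auto
  have CD: "D < C"
    using ds cosh_real_nonneg_less_iff[of "\<bar>d\<bar>" "\<bar>s\<bar>"] by (simp add: C_def D_def)
  have "S^2 = C^2 - 1" by (simp add: S_def C_def sinh_square_eq)
  then have SS: "S^2 = (C - 1) * (C + 1)" by (simp add: power2_eq_square algebra_simps)
  have "P * S^2 = P * (C - 1) * (C - D) + P * (C - 1) * (1 + D)"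
    unfolding SS by (simp add: algebra_simps)
  also have "\<dots> \<le> P * (C - 1) * (C - D) + 2 * s * S * (C - D)"
    using hyperbolic_ineq[of d s] ds s0 by (simp add: P_def C_def D_def S_def)
  finally have "P * S^2 / (2 * s^2 * (C - D)) \<le> (P * (C - 1) * (C - D) + 2 * s * S * (C - D)) / (2 * s^2 * (C - D))"
    using s0 CD by (intro divide_right_mono) auto
  also have "\<dots> = P * (C - 1) / (2 * s^2) + S / s" using s0 CD by (simp add: field_simps power2_eq_square)
  finally show ?thesis by (simp add: P_def C_def D_def S_def)
qed

lemma fWYD_le_interior:
  fixes x p :: real
  assumes x: "0 < x" "x \<noteq> 1" and p: "0 < p" "p < 1"
  shows "p * (1 - p) * (x - 1)^2 / ((x powr p - 1) * (x powr (1 - p) - 1))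
         \<le> 2 * p * (1 - p) * ((1 + x) / 2 - x powr (1/2)) + (x - 1) / ln x"
proof -
  define s d where "s = ln x / 2" and "d = (2 * p - 1) * s"
  have s0: "s \<noteq> 0" using x by (simp add: s_def)
  have ds: "\<bar>d\<bar> < \<bar>s\<bar>"
    using p s0 by (simp add: d_def abs_mult abs_less_iff)
  define E F where "E = exp s" and "F = exp d"
  have E0: "0 < E" and F0: "0 < F" by (auto simp: E_def F_def)
  define C D S where "C = cosh s" and "D = cosh d" and "S = sinh s"
  have C: "C = (E + inverse E) / 2" and D: "D = (F + inverse F) / 2" and S: "S = (E - inverse E) / 2"
    by (simp_all add: C_def D_def S_def E_def F_def cosh_field_def sinh_field_def exp_minus)
  have CD: "D < C"
    using ds cosh_real_nonneg_less_iff[of "\<bar>d\<bar>" "\<bar>s\<bar>"] by (simp add: C_def D_def)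
  have xE: "x = E * E" using x by (simp add: E_def s_def flip: exp_add)
  have xp: "x powr p = E * F" and xq: "x powr (1 - p) = E / F" and xh: "x powr (1/2) = E"
    using x by (simp_all add: powr_def E_def F_def s_def d_def algebra_simps flip: exp_add exp_diff)
  define P where "P = s^2 - d^2"
  have pq: "p * (1 - p) = P / (4 * s^2)"
    using s0 by (simp add: P_def d_def power2_eq_square field_simps)
  have "p * (1 - p) * (x - 1)^2 / ((x powr p - 1) * (x powr (1 - p) - 1)) = E * (P * S^2 / (2 * s^2 * (C - D)))"
  proof -
    have i1: "(x - 1)^2 = 4 * E^2 * S^2" unfolding xE S using E0 by (simp add: field_simps power2_eq_square)
    have i2: "(x powr p - 1) * (x powr (1 - p) - 1) = 2 * E * (C - D)"
      unfolding xp xq C D using E0 F0 by (simp add: field_simps)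
    show ?thesis unfolding pq i1 i2 using E0 s0 CD by (simp add: field_simps power2_eq_square)
  qed
  also have "\<dots> \<le> E * (P * (C - 1) / (2 * s^2) + S / s)"
    using hyperbolic_WYD_ineq[OF ds] E0 unfolding P_def C_def D_def S_def by (intro mult_left_mono) auto
  also have "\<dots> = 2 * p * (1 - p) * ((1 + x) / 2 - x powr (1/2)) + (x - 1) / ln x"
  proof -
    have i3: "(1 + x) / 2 - x powr (1/2) = E * (C - 1)"
      using E0 unfolding C by (subst xh) (simp add: xE field_simps)
    have lnx: "ln x = 2 * s" by (simp add: s_def)
    have i4: "(x - 1) / ln x = E * (S / s)"
      using E0 s0 unfolding lnx S by (simp add: xE field_simps power2_eq_square)
    have "2 * p * (1 - p) * ((1 + x) / 2 - x powr (1/2)) = 2 * (p * (1 - p)) * ((1 + x) / 2 - x powr (1/2))"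
      by simp
    also have "\<dots> = E * (P * (C - 1) / (2 * s^2))"
      unfolding pq i3 using s0 by (simp add: field_simps power2_eq_square)
    finally show ?thesis unfolding i4 by (simp add: algebra_simps)
  qed
  finally show ?thesis .
qed

lemma fWYD_le:
  assumes x: "0 < x" and p: "0 \<le> p" "p \<le> 1"
  shows "fWYD p x \<le> 2 * p * (1 - p) * ((1 + x) / 2 - x powr (1/2)) + fWYD 0 x"
  using fWYD_le_interior[OF x] p by (cases "x = 1"; cases "p = 0 \<or> p = 1") (auto simp: fWYD_def)

section \<open>Continuity of \<open>fWYD\<close> and the logarithmic mean as an integral\<close>

lemma fWYD_tendsto_1:
  assumes p: "0 \<le> p" "p \<le> 1"
  shows "(fWYD p \<longlongrightarrow> 1) (at 1)"
proof -
  have near_1: "eventually (\<lambda>y. 0 < y \<and> y \<noteq> 1) (at (1::real))"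
    unfolding eventually_at by (intro exI[of _ 1]) (auto simp: dist_real_def)
  show ?thesis
  proof (cases "p = 0 \<or> p = 1")
    case True
    have "((\<lambda>y. (ln y - ln 1) / (y - 1)) \<longlongrightarrow> 1) (at (1::real))"
      using DERIV_ln[of 1] by (simp add: has_field_derivative_iff)
    then have "((\<lambda>y. inverse ((ln y - ln 1) / (y - 1))) \<longlongrightarrow> inverse 1) (at (1::real))"
      by (rule tendsto_inverse) simp
    moreover have "eventually (\<lambda>y. inverse ((ln y - ln 1) / (y - 1)) = fWYD p y) (at 1)"
      using near_1 by eventually_elim (use True in \<open>auto simp: fWYD_def\<close>)
    ultimately show ?thesis by (simp add: Lim_transform_eventually)
  next
    case False
    then have p01: "0 < p" "p < 1" using p by auto
    define q where "q = (\<lambda>r y::real. (y powr r - 1) / (y - 1))"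
    have "(q r \<longlongrightarrow> r) (at 1)" for r
      using has_real_derivative_powr[of 1 r] by (simp add: q_def has_field_derivative_iff)
    then have "((\<lambda>y. p * (1 - p) * inverse (q p y * q (1 - p) y)) \<longlongrightarrow> p * (1 - p) * inverse (p * (1 - p))) (at 1)"
      using p01 by (intro tendsto_intros) auto
    moreover have "p * (1 - p) * inverse (p * (1 - p)) = 1" using p01 by (simp add: field_simps)
    ultimately have "((\<lambda>y. p * (1 - p) * inverse (q p y * q (1 - p) y)) \<longlongrightarrow> 1) (at 1)" by simp
    moreover have "eventually (\<lambda>y. p * (1 - p) * inverse (q p y * q (1 - p) y) = fWYD p y) (at 1)"
      using near_1 by eventually_elim
        (use False in \<open>simp add: fWYD_def q_def divide_inverse inverse_mult_distrib power2_eq_square mult_ac\<close>)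
    ultimately show ?thesis by (rule Lim_transform_eventually)
  qed
qed

lemma continuous_on_fWYD:
  assumes p: "0 \<le> p" "p \<le> 1"
  shows "continuous_on {0<..} (fWYD p)"
proof -
  have "isCont (fWYD p) x" if x: "0 < x" for x
  proof (cases "x = 1")
    case False
    define g where "g = (if p = 0 \<or> p = 1 then (\<lambda>y. (y - 1) / ln y)
                       else (\<lambda>y. p * (1 - p) * (y - 1)^2 / ((y powr p - 1) * (y powr (1 - p) - 1))))"
    have "eventually (\<lambda>y. fWYD p y = g y) (nhds x)"
      using t1_space_nhds[OF False] by eventually_elim (auto simp: fWYD_def g_def)
    moreover have "x powr r \<noteq> 1" if "0 < r" for r
      using x False that by (auto simp: powr_def)
    then have "isCont g x"
      using x False p unfolding g_def by (auto intro!: continuous_intros)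
    ultimately show ?thesis using isCont_cong by blast
  next
    case True
    then show ?thesis using fWYD_tendsto_1[OF p] by (simp add: continuous_at fWYD_def)
  qed
  then show ?thesis by (simp add: continuous_on_eq_continuous_at)
qed

lemma powr_has_integral_fWYD0:
  assumes c: "0 < c"
  shows "((\<lambda>t. c powr t) has_integral fWYD 0 c) {0..1}"
proof (cases "c = 1")
  case False
  then have lc: "ln c \<noteq> 0" using c by simp
  have "((\<lambda>t. exp (t * ln c)) has_integral (exp (1 * ln c) / ln c - exp (0 * ln c) / ln c)) {0..1}"
  proof (rule fundamental_theorem_of_calculus)
    fix t :: real
    have "((\<lambda>t. exp (t * ln c) / ln c) has_real_derivative exp (t * ln c)) (at t)"
      by (rule derivative_eq_intros refl | simp add: lc)+
    then show "((\<lambda>t. exp (t * ln c) / ln c) has_vector_derivative exp (t * ln c)) (at t within {0..1})"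
      by (simp add: has_real_derivative_iff_has_vector_derivative[symmetric] has_field_derivative_at_within)
  qed simp
  then show ?thesis using c False by (simp add: powr_def fWYD_def diff_divide_distrib)
qed (use has_integral_const_real[of 1 0 1] in \<open>simp add: fWYD_def\<close>)

text \<open>Exchange of a uniform limit and the integral; the library version needs a Banach codomain.\<close>

lemma has_integral_uniform_limit:
  fixes F :: "nat \<Rightarrow> real \<Rightarrow> 'b::real_normed_vector"
  assumes int: "\<And>n. (F n has_integral I n) {a..b}" and IJ: "I \<longlonglongrightarrow> J"
    and unif: "uniform_limit {a..b} F G sequentially"
  shows "(G has_integral J) {a..b}"
  unfolding has_integral_real
proof (intro allI impI)
  fix e :: real assume e: "0 < e"
  define c where "c = content {a..b} + 1"
  have c: "0 < c" by (simp add: c_def add_nonneg_pos)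
  have "eventually (\<lambda>n. dist (I n) J < e / 3 \<and> (\<forall>t\<in>{a..b}. dist (F n t) (G t) < e / (3 * c))) sequentially"
    using e c by (intro eventually_conj tendstoD[OF IJ] uniform_limitD[OF unif]) simp_all
  then obtain n where "dist (I n) J < e / 3" "\<forall>t\<in>{a..b}. dist (F n t) (G t) < e / (3 * c)"
    unfolding eventually_sequentially by blast
  then have In: "norm (I n - J) < e / 3" and Fn: "\<forall>t\<in>{a..b}. norm (G t - F n t) \<le> e / (3 * c)"
    by (auto simp: dist_norm norm_minus_commute intro: less_imp_le)
  obtain \<gamma> where \<gamma>: "gauge \<gamma>" and fine: "\<And>D. D tagged_division_of {a..b} \<Longrightarrow> \<gamma> fine D \<Longrightarrow>
      norm ((\<Sum>(x,k)\<in>D. content k *\<^sub>R F n x) - I n) < e / 3"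
    using int[of n] e unfolding has_integral_real by (meson divide_pos_pos zero_less_numeral)
  have "norm ((\<Sum>(x,k)\<in>D. content k *\<^sub>R G x) - J) < e"
    if D: "D tagged_division_of {a..b}" "\<gamma> fine D" for D
  proof -
    have "norm (\<Sum>(x,k)\<in>D. content k *\<^sub>R (G x - F n x)) \<le> e / (3 * c) * content {a..b}"
      using rsum_bound[of D a b "\<lambda>x. G x - F n x" "e / (3 * c)"] D Fn by (simp only: cbox_interval)
    also have "\<dots> < e / 3" using e c by (simp add: c_def field_simps)
    finally have small: "norm (\<Sum>(x,k)\<in>D. content k *\<^sub>R (G x - F n x)) < e / 3" .
    have eq: "(\<Sum>(x,k)\<in>D. content k *\<^sub>R G x) - J
        = (\<Sum>(x,k)\<in>D. content k *\<^sub>R (G x - F n x)) + ((\<Sum>(x,k)\<in>D. content k *\<^sub>R F n x) - I n) + (I n - J)"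
      by (simp add: scaleR_diff_right sum_subtractf case_prod_unfold)
    have tri: "norm (u + v + w) \<le> norm u + norm v + norm w" for u v w :: 'b
      using norm_triangle_ineq[of "u + v" w] norm_triangle_ineq[of u v] by linarith
    have bound: "norm ((\<Sum>(x,k)\<in>D. content k *\<^sub>R G x) - J)
        \<le> norm (\<Sum>(x,k)\<in>D. content k *\<^sub>R (G x - F n x)) + norm ((\<Sum>(x,k)\<in>D. content k *\<^sub>R F n x) - I n)
          + norm (I n - J)"
      unfolding eq by (rule tri)
    show ?thesis using bound small fine[OF D] In by linarith
  qed
  with \<gamma> show "\<exists>\<gamma>. gauge \<gamma> \<and> (\<forall>D. D tagged_division_of {a..b} \<and> \<gamma> fine D \<longrightarrow>
      norm ((\<Sum>(x,k)\<in>D. content k *\<^sub>R G x) - J) < e)" by auto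
qed

lemma uniform_limit_bernstein_powr:
  fixes A :: "'a::{real_inner,complete_space} op"
  assumes between: "quadform_between A a b" and ab: "a < b" and a0: "0 < a"
  shows "uniform_limit {0..1} (\<lambda>n t. poly_op A (bernstein_poly (\<lambda>x. x powr t) a b n))
           (\<lambda>t. fcalc A a b (\<lambda>x. x powr t)) sequentially"
proof (rule uniform_limitI)
  fix e :: real assume e: "0 < e"
  have "continuous_on ({0..1} \<times> {a..b}) (\<lambda>z. snd z powr fst z)"
    using a0 by (intro continuous_intros) auto
  then obtain K where K: "0 \<le> K" and Kh: "\<And>z w. z \<in> {0..1} \<times> {a..b} \<Longrightarrow> w \<in> {0..1} \<times> {a..b} \<Longrightarrow>
      \<bar>snd z powr fst z - snd w powr fst w\<bar> \<le> e / 2 + K * (dist z w)^2"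
    using compact_continuous_quadratic_modulus[OF compact_Times[OF compact_Icc compact_Icc] _ half_gt_zero[OF e]]
    by blast
  have modulus: "\<forall>x\<in>{a..b}. \<forall>y\<in>{a..b}. \<bar>x powr t - y powr t\<bar> \<le> e / 2 + K * (x - y)^2" if "t \<in> {0..1}" for t
  proof (intro ballI)
    fix x y assume "x \<in> {a..b}" "y \<in> {a..b}"
    then show "\<bar>x powr t - y powr t\<bar> \<le> e / 2 + K * (x - y)^2"
      using Kh[of "(t, x)" "(t, y)"] that by (simp add: dist_Pair_Pair dist_real_def)
  qed
  have cont: "continuous_on {a..b} (\<lambda>x. x powr t)" for t
    using a0 by (intro continuous_intros) auto
  have "eventually (\<lambda>n. 1 \<le> n \<and> K * (b - a)^2 / real n < e / 2) sequentially"
    using e by (intro eventually_const_div_less) simp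
  then show "eventually (\<lambda>n. \<forall>t\<in>{0..1}. dist (poly_op A (bernstein_poly (\<lambda>x. x powr t) a b n))
      (fcalc A a b (\<lambda>x. x powr t)) < e) sequentially"
  proof eventually_elim
    case (elim n)
    show ?case
    proof
      fix t :: real assume "t \<in> {0..1}"
      then have "norm (poly_op A (bernstein_poly (\<lambda>x. x powr t) a b n) - fcalc A a b (\<lambda>x. x powr t))
          \<le> e / 2 + K * (b - a)^2 / real n"
        using norm_bernstein_fcalc_le[OF between ab cont _ _ K modulus] elim e by simp
      with elim show "dist (poly_op A (bernstein_poly (\<lambda>x. x powr t) a b n)) (fcalc A a b (\<lambda>x. x powr t)) < e"
        unfolding dist_norm by linarith
    qed
  qed
qed

lemma opfun_powr_has_integral:
  fixes A :: "'a::{real_inner,complete_space} op"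
  assumes P: "positive_op A" and I: "invertible_op A" and nontrivial: "\<exists>x::'a. x \<noteq> 0"
  shows "((\<lambda>t. opfun (\<lambda>x. x powr t) A) has_integral opfun (fWYD 0) A) {0..1}"
proof (cases rule: opfun_cases[OF P I nontrivial])
  case 1
  define a b where "a = spectral_lb A" and "b = spectral_ub A"
  have ab: "a < b" and a0: "0 < a" and between: "quadform_between A a b"
    using 1 spectral_lb_pos[OF P I nontrivial] quadform_between_spectral[OF P I nontrivial]
    by (simp_all add: a_def b_def)
  define F where "F = (\<lambda>n t. poly_op A (bernstein_poly (\<lambda>x. x powr t) a b n))"
  define W where "W = (\<lambda>n k. poly_op A (unit_param a b ^ k * unit_coparam a b ^ (n - k)))"
  have node_pos: "0 < bernstein_node a b n k" if "k \<le> n" for n k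
    using bernstein_node_in[of a b k n] that ab a0 by auto
  have F_eq: "F n = (\<lambda>t. \<Sum>k\<le>n. (bernstein_node a b n k powr t * real (n choose k)) *\<^sub>R W n k)" for n
    by (simp add: F_def W_def bernstein_poly_def poly_op_sum poly_op_smult)
  have "(F n has_integral poly_op A (bernstein_poly (fWYD 0) a b n)) {0..1}" for n
    unfolding F_eq using node_pos
    by (auto simp: W_def bernstein_poly_def poly_op_sum poly_op_smult
        intro!: has_integral_sum has_integral_scaleR_left has_integral_mult_left powr_has_integral_fWYD0)
  moreover have "(\<lambda>n. poly_op A (bernstein_poly (fWYD 0) a b n)) \<longlonglongrightarrow> fcalc A a b (fWYD 0)"
    using a0 by (intro bernstein_LIMSEQ_fcalc[OF between ab] continuous_on_subset[OF continuous_on_fWYD]) auto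
  ultimately show ?thesis
    unfolding 1(2) a_def[symmetric] b_def[symmetric]
    by (rule has_integral_uniform_limit[OF _ _ uniform_limit_bernstein_powr[OF between ab a0, folded F_def]])
next
  case 2
  then show ?thesis
    using has_integral_scaleR_left[OF powr_has_integral_fWYD0[OF spectral_lb_pos[OF P I nontrivial]]] by simp
qed

section \<open>Reduction to the scalar inequality\<close>

definition WYD_gap :: "real \<Rightarrow> real \<Rightarrow> real" where
  "WYD_gap p x = 2 * p * (1 - p) * ((1 + x) / 2 - x powr (1/2)) + (fWYD 0 x - fWYD p x)"

lemma continuous_on_powr_pos: "continuous_on {0<..} (\<lambda>x::real. x powr r)"
  by (intro continuous_intros) auto

lemma continuous_on_WYD_gap: "0 \<le> p \<Longrightarrow> p \<le> 1 \<Longrightarrow> continuous_on {0<..} (WYD_gap p)"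
  unfolding WYD_gap_def using continuous_on_fWYD[of 0] continuous_on_fWYD[of p]
  by (intro continuous_intros) auto

context
  fixes A :: "'a::{real_inner,complete_space} op"
  assumes P: "positive_op A" and I: "invertible_op A" and nontrivial: "\<exists>x::'a. x \<noteq> 0"
begin

lemma opfun_powr_inverse:
  "opfun (\<lambda>x. x powr r) A o\<^sub>L opfun (\<lambda>x. x powr (- r)) A = id_blinfun"
proof -
  have "opfun (\<lambda>x. x powr r) A o\<^sub>L opfun (\<lambda>x. x powr (- r)) A = opfun (\<lambda>x. x powr r * x powr (- r)) A"
    by (rule opfun_mult[OF P I nontrivial continuous_on_powr_pos continuous_on_powr_pos])
  also have "\<dots> = opfun (\<lambda>x. 1) A"
    by (rule opfun_cong[OF P I nontrivial]) (simp flip: powr_add)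
  finally show ?thesis by (simp add: opfun_const[OF P I nontrivial])
qed

lemma opfun_sqrt_square: "opfun (\<lambda>x. x powr (1/2)) A o\<^sub>L opfun (\<lambda>x. x powr (1/2)) A = A"
proof -
  have "opfun (\<lambda>x. x powr (1/2)) A o\<^sub>L opfun (\<lambda>x. x powr (1/2)) A
      = opfun (\<lambda>x. x powr (1/2) * x powr (1/2)) A"
    by (rule opfun_mult[OF P I nontrivial continuous_on_powr_pos continuous_on_powr_pos])
  also have "\<dots> = opfun (\<lambda>x. x) A"
    by (rule opfun_cong[OF P I nontrivial]) (simp flip: powr_add)
  finally show ?thesis by (simp add: opfun_id[OF P I nontrivial])
qed

lemma opfun_WYD_gap:
  assumes "0 \<le> p" "p \<le> 1"
  shows "opfun (WYD_gap p) A = (2 * p * (1 - p)) *\<^sub>R ((1/2) *\<^sub>R (id_blinfun + A) - opfun (\<lambda>x. x powr (1/2)) A)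
     + (opfun (fWYD 0) A - opfun (fWYD p) A)"
proof -
  note opfun_rules = opfun_add[OF P I nontrivial] opfun_diff[OF P I nontrivial] opfun_scale[OF P I nontrivial]
  have "opfun (\<lambda>x. (1 + x) / 2) A = (1/2) *\<^sub>R (id_blinfun + A)"
    using opfun_scale[OF P I nontrivial, of "\<lambda>x. 1 + x" "1/2"] opfun_add[OF P I nontrivial, of "\<lambda>_. 1" "\<lambda>x. x"]
    by (simp add: opfun_const[OF P I nontrivial] opfun_id[OF P I nontrivial] continuous_on_add
        continuous_on_id continuous_on_const)
  moreover have "opfun (WYD_gap p) A = (2 * p * (1 - p)) *\<^sub>R (opfun (\<lambda>x. (1 + x) / 2) A - opfun (\<lambda>x. x powr (1/2)) A)
      + (opfun (fWYD 0) A - opfun (fWYD p) A)"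
    using continuous_on_fWYD[of 0] continuous_on_fWYD[OF assms] unfolding WYD_gap_def
    by (simp add: opfun_rules continuous_on_powr_pos continuous_intros)
  ultimately show ?thesis by simp
qed

lemma positive_opfun_WYD_gap: "0 \<le> p \<Longrightarrow> p \<le> 1 \<Longrightarrow> positive_op (opfun (WYD_gap p) A)"
  by (intro positive_opfun[OF P I nontrivial] continuous_on_WYD_gap) (auto simp: WYD_gap_def dest: fWYD_le)

end

text \<open>Conjugation by \<open>S\<^sup>1\<^sup>/\<^sup>2\<close> turns the pair \<open>(S, T)\<close> into \<open>(1, X)\<close>.\<close>

lemma sqrt_congruence:
  fixes S T :: "'a::{real_inner,complete_space} op"
  assumes PS: "positive_op S" and IS: "invertible_op S" and PT: "positive_op T" and IT: "invertible_op T"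
    and nontrivial: "\<exists>x::'a. x \<noteq> 0"
  defines "R \<equiv> opfun (\<lambda>x. x powr (1/2)) S"
    and "X \<equiv> opfun (\<lambda>x. x powr (-1/2)) S o\<^sub>L T o\<^sub>L opfun (\<lambda>x. x powr (-1/2)) S"
  shows "selfadjoint R" "R o\<^sub>L R = S" "R o\<^sub>L X o\<^sub>L R = T" "positive_op X" "invertible_op X"
proof -
  define R' where "R' = opfun (\<lambda>x. x powr (-1/2)) S"
  have "R o\<^sub>L R' = id_blinfun" "R' o\<^sub>L R = id_blinfun"
    using opfun_powr_inverse[OF PS IS nontrivial, of "1/2"] opfun_powr_inverse[OF PS IS nontrivial, of "-1/2"]
    by (simp_all add: R_def R'_def)
  then have "(R o\<^sub>L R') v = v" "(R' o\<^sub>L R) v = v" for v by simp_all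
  then have RR': "R (R' v) = v" "R' (R v) = v" for v by simp_all
  have X: "X = R' o\<^sub>L T o\<^sub>L R'" unfolding X_def R'_def ..
  show "selfadjoint R" unfolding R_def by (rule selfadjoint_opfun[OF PS IS nontrivial continuous_on_powr_pos])
  show "R o\<^sub>L R = S" unfolding R_def by (rule opfun_sqrt_square[OF PS IS nontrivial])
  show "R o\<^sub>L X o\<^sub>L R = T" unfolding X by (rule blinfun_eqI) (simp add: RR')
  show "positive_op X"
    unfolding X R'_def by (rule positive_sandwich[OF selfadjoint_opfun[OF PS IS nontrivial continuous_on_powr_pos] PT])
  have "X o\<^sub>L (R o\<^sub>L inv_op T o\<^sub>L R) = id_blinfun" "(R o\<^sub>L inv_op T o\<^sub>L R) o\<^sub>L X = id_blinfun"
    unfolding X by (simp_all add: blinfun_eqI RR' apply_inv_op[OF IT])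
  then show "invertible_op X" unfolding invertible_op_def by blast
qed

lemma WYD_gap_sandwich:
  fixes S T :: "'a::{real_inner,complete_space} op"
  assumes PS: "positive_op S" and IS: "invertible_op S" and PT: "positive_op T" and IT: "invertible_op T"
    and nontrivial: "\<exists>x::'a. x \<noteq> 0" and p: "0 \<le> p" "p \<le> 1"
  defines "R \<equiv> opfun (\<lambda>x. x powr (1/2)) S"
    and "X \<equiv> opfun (\<lambda>x. x powr (-1/2)) S o\<^sub>L T o\<^sub>L opfun (\<lambda>x. x powr (-1/2)) S"
  shows "((2 * p * (1 - p)) *\<^sub>R (amean S T - gmean S T) + logmean S T) - WYD p S T
       = R o\<^sub>L opfun (WYD_gap p) X o\<^sub>L R"
proof -
  note RX = sqrt_congruence[OF PS IS PT IT nontrivial, folded R_def X_def]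
  have wgmean: "wgmean S t T = R o\<^sub>L opfun (\<lambda>x. x powr t) X o\<^sub>L R" for t
    by (simp add: wgmean_def Let_def R_def X_def)
  have "bounded_linear (\<lambda>B. R o\<^sub>L B o\<^sub>L R)"
    by (intro bounded_linear_compose[OF blinfun_compose.bounded_linear_left] blinfun_compose.bounded_linear_right)
  from has_integral_linear[OF opfun_powr_has_integral[OF RX(4,5) nontrivial] this]
  have "logmean S T = R o\<^sub>L opfun (fWYD 0) X o\<^sub>L R"
    unfolding logmean_def by (intro integral_unique) (simp add: o_def wgmean)
  moreover have "amean S T = R o\<^sub>L ((1/2) *\<^sub>R (id_blinfun + X)) o\<^sub>L R"
    unfolding amean_def by (simp add: blinfun_compose_simps blinfun_compose_assoc flip: RX(2,3))
  moreover have "WYD p S T = R o\<^sub>L opfun (fWYD p) X o\<^sub>L R"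
    by (simp add: WYD_def Let_def R_def X_def)
  ultimately show ?thesis
    by (simp add: gmean_def wgmean opfun_WYD_gap[OF RX(4,5) nontrivial p] blinfun_compose_simps)
qed

theorem corollary4p1:
  fixes S T :: "'a::{real_inner, complete_space} \<Rightarrow>\<^sub>L 'a"
    and p :: real
  assumes "positive_op S" "invertible_op S"
    and "positive_op T" "invertible_op T"
    and "0 \<le> p" "p \<le> 1"
  shows "loewner_le (WYD p S T)
           ((2 * p * (1 - p)) *\<^sub>R (amean S T - gmean S T) + logmean S T)"
proof (cases "\<exists>x::'a. x \<noteq> 0")
  case False
  then have "B = 0" for B :: "'a op" by (intro blinfun_eqI) auto
  from this[of "((2 * p * (1 - p)) *\<^sub>R (amean S T - gmean S T) + logmean S T) - WYD p S T"]
  show ?thesis unfolding loewner_le_def by simp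
next
  case True
  note RX = sqrt_congruence[OF assms(1-4) True]
  show ?thesis
    unfolding loewner_le_def WYD_gap_sandwich[OF assms(1-4) True assms(5,6)]
    by (rule positive_sandwich[OF RX(1) positive_opfun_WYD_gap[OF RX(4,5) True assms(5,6)]])
qed

end
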